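(* Let $\rho_0,\rho_1$ be two density matrices of the same dimension, where $\rho_0$ is realized as the mixture $\{p^0_i,|\alpha^0_i\rangle\}$ and $\rho_1$ as the mixture $\{p^1_i,|\alpha^1_i\rangle\}$ of pure states. Consider the protocol in which, to encode $b\in\{0,1\}$, an honest Alice picks $|\alpha^b_i\rangle$ with probability $p^b_i$ and sends it to Bob; at revealing time Alice sends $b$ and $i$ to Bob, and Bob tests whether Alice is cheating by projecting his state onto $|\alpha^b_i\rangle$ (he detects cheating if the projection fails). Let $f=f(\rho_0,\rho_1)$ be the fidelity. Then for any $0\le\alpha\le\pi/4$ there exists a strategy for Alice (a common deposit, together with a "zero" reveal strategy and a "one" reveal strategy) with advantage $\sqrt{f}\,\sin(2\alpha)/2$ and probability of detection at most $\frac{(1-f)\sin^2(\alpha)}{2}$.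
   Context: The fidelity of density matrices $\rho_0,\rho_1$ on the same space is $f(\rho_0,\rho_1)=\sup|\langle\phi_0|\phi_1\rangle|^2$, the supremum over all purifications $|\phi_0\rangle$ of $\rho_0$ and $|\phi_1\rangle$ of $\rho_1$ into a common larger Hilbert space. A cheating Alice prepares an arbitrary joint state of her registers and the register sent to Bob, and at reveal time uses either a zero strategy or a one strategy (each sending some $b$ and $i$); her advantage is the amount by which the probability of revealing $b=0$ under the zero strategy exceeds the probability of revealing $b=0$ under the one strategy, the latter being $1/2$ here, and the probability of detection is the probability that Bob's projection test fails. *)

theory Defs
  imports Complex_Main
begin

text \<open>Bob's register is C^n: a vector is a function nat => complex of which
only the entries k < n matter. A bipartite vector on (Alice register C^m) (x) (Bob register C^n)
is a function  psi :: nat => nat => complex, psi a k the coefficient of |a>|k>, a < m, k < n.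
Bits b are the naturals 0 and 1.\<close>

definition unit_vec :: "nat \<Rightarrow> (nat \<Rightarrow> complex) \<Rightarrow> bool" where
  "unit_vec n x \<longleftrightarrow> (\<Sum>k<n. (cmod (x k))\<^sup>2) = 1"

definition unit_bivec :: "nat \<Rightarrow> nat \<Rightarrow> (nat \<Rightarrow> nat \<Rightarrow> complex) \<Rightarrow> bool" where
  "unit_bivec m n psi \<longleftrightarrow> (\<Sum>a<m. \<Sum>k<n. (cmod (psi a k))\<^sup>2) = 1"

definition mixture_dm :: "nat \<Rightarrow> (nat \<Rightarrow> real) \<Rightarrow> (nat \<Rightarrow> nat \<Rightarrow> complex) \<Rightarrow> nat \<Rightarrow> nat \<Rightarrow> complex"
  where "mixture_dm N p v j k = (\<Sum>i<N. complex_of_real (p i) * v i j * cnj (v i k))"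

definition is_mixture :: "nat \<Rightarrow> nat \<Rightarrow> (nat \<Rightarrow> real) \<Rightarrow> (nat \<Rightarrow> nat \<Rightarrow> complex) \<Rightarrow> bool" where
  "is_mixture n N p v \<longleftrightarrow> (\<forall>i<N. p i \<ge> 0) \<and> (\<Sum>i<N. p i) = 1 \<and> (\<forall>i<N. unit_vec n (v i))"

text \<open>phi (on C^m (x) C^n) is a purification of the n x n matrix rho: Tr_A |phi><phi| = rho.\<close>
definition purification :: "nat \<Rightarrow> nat \<Rightarrow> (nat \<Rightarrow> nat \<Rightarrow> complex) \<Rightarrow> (nat \<Rightarrow> nat \<Rightarrow> complex) \<Rightarrow> bool" where
  "purification m n rho phi \<longleftrightarrow> (\<forall>j<n. \<forall>k<n. (\<Sum>a<m. phi a j * cnj (phi a k)) = rho j k)"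

definition bi_inner :: "nat \<Rightarrow> nat \<Rightarrow> (nat \<Rightarrow> nat \<Rightarrow> complex) \<Rightarrow> (nat \<Rightarrow> nat \<Rightarrow> complex) \<Rightarrow> complex" where
  "bi_inner m n phi psi = (\<Sum>a<m. \<Sum>k<n. cnj (phi a k) * psi a k)"

definition fidelity :: "nat \<Rightarrow> (nat \<Rightarrow> nat \<Rightarrow> complex) \<Rightarrow> (nat \<Rightarrow> nat \<Rightarrow> complex) \<Rightarrow> real" where
  "fidelity n rho0 rho1 = Sup {(cmod (bi_inner m n phi0 phi1))\<^sup>2 | m phi0 phi1.
      purification m n rho0 phi0 \<and> purification m n rho1 phi1}"

definition qform :: "nat \<Rightarrow> (nat \<Rightarrow> nat \<Rightarrow> complex) \<Rightarrow> (nat \<Rightarrow> complex) \<Rightarrow> complex" where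
  "qform m E x = (\<Sum>a<m. \<Sum>a'<m. cnj (x a) * E a a' * x a')"

definition psd :: "nat \<Rightarrow> (nat \<Rightarrow> nat \<Rightarrow> complex) \<Rightarrow> bool" where
  "psd m E \<longleftrightarrow> (\<forall>x. qform m E x \<in> \<real> \<and> Re (qform m E x) \<ge> 0)"

text \<open>A reveal strategy: a POVM {E b i} on Alice's register C^m, whose outcome (b,i)
(b in {0,1}, i < N b) is the message Alice sends to Bob.\<close>
definition reveal_povm :: "nat \<Rightarrow> (nat \<Rightarrow> nat) \<Rightarrow> (nat \<Rightarrow> nat \<Rightarrow> nat \<Rightarrow> nat \<Rightarrow> complex) \<Rightarrow> bool" where
  "reveal_povm m N E \<longleftrightarrow> (\<forall>b<2. \<forall>i<N b. psd m (E b i)) \<and>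
     (\<forall>a<m. \<forall>a'<m. (\<Sum>b<2. \<Sum>i<N b. E b i a a') = (if a = a' then 1 else 0))"

text \<open>Probability that Alice sends (b,i): <psi| E b i (x) I |psi>.\<close>
definition prob_send :: "nat \<Rightarrow> nat \<Rightarrow> (nat \<Rightarrow> nat \<Rightarrow> complex) \<Rightarrow> (nat \<Rightarrow> nat \<Rightarrow> complex) \<Rightarrow> real" where
  "prob_send m n psi Ebi = Re (\<Sum>k<n. qform m Ebi (\<lambda>a. psi a k))"

text \<open>Probability that Alice sends (b,i) and Bob's projection onto |w> = |alpha^b_i> succeeds:
 <psi| E b i (x) |w><w| |psi>.\<close>
definition prob_send_pass :: "nat \<Rightarrow> nat \<Rightarrow> (nat \<Rightarrow> nat \<Rightarrow> complex) \<Rightarrow> (nat \<Rightarrow> nat \<Rightarrow> complex) \<Rightarrow> (nat \<Rightarrow> complex) \<Rightarrow> real" where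
  "prob_send_pass m n psi Ebi w = Re (qform m Ebi (\<lambda>a. \<Sum>k<n. cnj (w k) * psi a k))"

definition prob_reveal0 :: "nat \<Rightarrow> nat \<Rightarrow> (nat \<Rightarrow> nat) \<Rightarrow> (nat \<Rightarrow> nat \<Rightarrow> complex) \<Rightarrow> (nat \<Rightarrow> nat \<Rightarrow> nat \<Rightarrow> nat \<Rightarrow> complex) \<Rightarrow> real" where
  "prob_reveal0 m n N psi E = (\<Sum>i<N 0. prob_send m n psi (E 0 i))"

text \<open>Probability that Bob's test fails, v b i = |alpha^b_i>.\<close>
definition prob_detect :: "nat \<Rightarrow> nat \<Rightarrow> (nat \<Rightarrow> nat) \<Rightarrow> (nat \<Rightarrow> nat \<Rightarrow> nat \<Rightarrow> complex) \<Rightarrow> (nat \<Rightarrow> nat \<Rightarrow> complex) \<Rightarrow> (nat \<Rightarrow> nat \<Rightarrow> nat \<Rightarrow> nat \<Rightarrow> complex) \<Rightarrow> real" where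
  "prob_detect m n N v psi E =
     (\<Sum>b<2. \<Sum>i<N b. prob_send m n psi (E b i) - prob_send_pass m n psi (E b i) (v b i))"

end

theory Submission
  imports Defs "HOL-Analysis.Convex"
begin

text \<open>
  Let \<open>\<phi>\<^sub>0, \<phi>\<^sub>1\<close> purify \<open>\<rho>\<^sub>0, \<rho>\<^sub>1\<close> with real overlap \<open>c = \<langle>\<phi>\<^sub>0|\<phi>\<^sub>1\<rangle>\<close> close to \<open>\<surd>f\<close>.
  Since \<open>\<phi>\<^sub>b\<close> and the standard purification \<open>\<Sum>\<^sub>i \<surd>p\<^sub>i |i\<rangle>|\<alpha>\<^sup>b\<^sub>i\<rangle>\<close> purify the same state, a
  contraction \<open>V\<^sub>b\<close> on Alice's side maps the latter to the former (Gram--Schmidt); the measurement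
  \<open>{V\<^sub>b|i\<rangle>\<langle>i|V\<^sub>b\<^sup>\<dagger>}\<close>, completed to a POVM, then passes Bob's test on any state \<open>\<chi>\<close> with probability
  at least \<open>|\<langle>\<phi>\<^sub>b|\<chi>\<rangle>|\<^sup>2\<close>. Alice deposits \<open>x|0\<rangle>\<phi>\<^sub>0 + y|1\<rangle>\<phi>\<^sub>1\<close>; to reveal she measures the qubit in
  the basis rotated by \<open>\<theta>\<close>, announces the outcome \<open>b\<close> and decodes \<open>i\<close>. This is detected with
  probability at most \<open>(1 - c\<^sup>2) sin\<^sup>2 \<theta>\<close>. For suitable \<open>x, y\<close> the angle \<open>\<theta> = -\<alpha>/2\<close> reveals \<open>0\<close> with
  probability \<open>1/2\<close> and \<open>\<theta> = \<alpha>/2\<close> with probability \<open>1/2 + c sin 2\<alpha> / (2 \<surd>(c\<^sup>2 sin\<^sup>2 \<alpha> + cos\<^sup>2 \<alpha>))\<close>;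
  a convex combination of the two brings the advantage down to exactly \<open>\<surd>f sin 2\<alpha> / 2\<close>.
\<close>

section \<open>Inner products of finite vectors\<close>

definition cinner :: "nat \<Rightarrow> (nat \<Rightarrow> complex) \<Rightarrow> (nat \<Rightarrow> complex) \<Rightarrow> complex" where
  "cinner m x y = (\<Sum>a<m. cnj (x a) * y a)"

definition sqnorm :: "nat \<Rightarrow> (nat \<Rightarrow> complex) \<Rightarrow> real" where
  "sqnorm m x = (\<Sum>a<m. (cmod (x a))\<^sup>2)"

lemma cnj_mult_self: "cnj z * z = complex_of_real ((cmod z)\<^sup>2)"
  by (metis complex_norm_square mult.commute)

lemma cinner_self: "cinner m x x = complex_of_real (sqnorm m x)"
  unfolding cinner_def sqnorm_def by (simp add: cnj_mult_self)

lemma sqnorm_nonneg: "sqnorm m x \<ge> 0"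
  unfolding sqnorm_def by (simp add: sum_nonneg)

lemma sqnorm_eq_0D: "sqnorm m x = 0 \<Longrightarrow> a < m \<Longrightarrow> x a = 0"
  unfolding sqnorm_def by (subst (asm) sum_nonneg_eq_0_iff) auto

lemma cnj_cinner: "cnj (cinner m x y) = cinner m y x"
  unfolding cinner_def by (simp add: mult.commute)

lemma cinner_cong:
  "(\<And>a. a < m \<Longrightarrow> x a = x' a) \<Longrightarrow> (\<And>a. a < m \<Longrightarrow> y a = y' a) \<Longrightarrow> cinner m x y = cinner m x' y'"
  unfolding cinner_def by (intro sum.cong) auto

lemma cinner_zero_left: "(\<And>a. a < m \<Longrightarrow> x a = 0) \<Longrightarrow> cinner m x y = 0"
  unfolding cinner_def by simp

lemma cinner_sum_right:
  "cinner m x (\<lambda>a. \<Sum>s\<in>S. f s * w s a) = (\<Sum>s\<in>S. f s * cinner m x (w s))"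
  unfolding cinner_def
  by (simp add: sum_distrib_left sum_distrib_right mult.left_commute sum.swap[of _ S])

lemma cinner_sum_left:
  "cinner m (\<lambda>a. \<Sum>s\<in>S. f s * w s a) y = (\<Sum>s\<in>S. cnj (f s) * cinner m (w s) y)"
  unfolding cinner_def
  by (simp add: sum_distrib_left sum_distrib_right mult.assoc mult.left_commute sum.swap[of _ S] cnj_sum)

lemma cinner_diff_right: "cinner m x (\<lambda>a. y a - z a) = cinner m x y - cinner m x z"
  unfolding cinner_def by (simp add: algebra_simps sum_subtractf)

lemma cinner_diff_left: "cinner m (\<lambda>a. y a - z a) x = cinner m y x - cinner m z x"
  unfolding cinner_def by (simp add: algebra_simps sum_subtractf)

lemma cinner_divide_right: "cinner m x (\<lambda>a. y a / r) = cinner m x y / r"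
  unfolding cinner_def by (simp add: sum_divide_distrib)

lemma cinner_divide_left: "cinner m (\<lambda>a. y a / r) x = cinner m y x / cnj r"
  unfolding cinner_def by (simp add: sum_divide_distrib)

lemma complex_Cauchy_Schwarz_sum:
  fixes x y :: "'a \<Rightarrow> complex"
  shows "(cmod (\<Sum>i\<in>I. cnj (x i) * y i))\<^sup>2 \<le> (\<Sum>i\<in>I. (cmod (x i))\<^sup>2) * (\<Sum>i\<in>I. (cmod (y i))\<^sup>2)"
proof -
  have "cmod (\<Sum>i\<in>I. cnj (x i) * y i) \<le> (\<Sum>i\<in>I. cmod (x i) * cmod (y i))"
    by (rule order_trans[OF norm_sum]) (simp add: norm_mult)
  then have "(cmod (\<Sum>i\<in>I. cnj (x i) * y i))\<^sup>2 \<le> (\<Sum>i\<in>I. cmod (x i) * cmod (y i))\<^sup>2"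
    by (simp add: power_mono)
  also have "\<dots> \<le> (\<Sum>i\<in>I. (cmod (x i))\<^sup>2) * (\<Sum>i\<in>I. (cmod (y i))\<^sup>2)"
    by (rule Cauchy_Schwarz_ineq_sum)
  finally show ?thesis .
qed

lemma complex_Cauchy_Schwarz_sum_sqrt:
  fixes x y :: "'a \<Rightarrow> complex"
  shows "cmod (\<Sum>i\<in>I. cnj (x i) * y i) \<le> sqrt (\<Sum>i\<in>I. (cmod (x i))\<^sup>2) * sqrt (\<Sum>i\<in>I. (cmod (y i))\<^sup>2)"
  using complex_Cauchy_Schwarz_sum[of x y I]
  by (simp add: real_le_rsqrt flip: real_sqrt_mult)

lemma bi_inner_self: "bi_inner m n \<chi> \<chi> = complex_of_real (\<Sum>a<m. \<Sum>k<n. (cmod (\<chi> a k))\<^sup>2)"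
  unfolding bi_inner_def by (simp add: cnj_mult_self)

lemma bi_inner_self_eq_1_iff: "bi_inner m n \<chi> \<chi> = 1 \<longleftrightarrow> (\<Sum>a<m. \<Sum>k<n. (cmod (\<chi> a k))\<^sup>2) = 1"
  unfolding bi_inner_self of_real_eq_1_iff ..

lemma cnj_bi_inner: "cnj (bi_inner m n \<phi> \<psi>) = bi_inner m n \<psi> \<phi>"
  unfolding bi_inner_def by (simp add: mult.commute)

lemma bi_inner_lincomb_right:
  "bi_inner m n \<phi> (\<lambda>a k. A * \<phi>0 a k + B * \<phi>1 a k) = A * bi_inner m n \<phi> \<phi>0 + B * bi_inner m n \<phi> \<phi>1"
  unfolding bi_inner_def by (simp add: algebra_simps sum.distrib sum_distrib_left)

lemma bi_inner_lincomb_left: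
  "bi_inner m n (\<lambda>a k. A * \<phi>0 a k + B * \<phi>1 a k) \<psi> = cnj A * bi_inner m n \<phi>0 \<psi> + cnj B * bi_inner m n \<phi>1 \<psi>"
  unfolding bi_inner_def by (simp add: algebra_simps sum.distrib sum_distrib_left)

lemma sum_eq_single:
  assumes "finite S" "s \<in> S" "\<And>t. t \<in> S \<Longrightarrow> t \<noteq> s \<Longrightarrow> f t = 0"
  shows "sum f S = f s"
  using assms by (simp add: sum.remove sum.neutral)

section \<open>Gram--Schmidt and contractions\<close>

definition orthonormal_or_zero :: "nat \<Rightarrow> nat \<Rightarrow> (nat \<Rightarrow> nat \<Rightarrow> complex) \<Rightarrow> bool" where
  "orthonormal_or_zero m K w \<longleftrightarrow>
     (\<forall>s<K. \<forall>t<K. s \<noteq> t \<longrightarrow> cinner m (w s) (w t) = 0) \<and> (\<forall>s<K. cinner m (w s) (w s) \<in> {0, 1})"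

definition orth_proj :: "nat \<Rightarrow> nat \<Rightarrow> (nat \<Rightarrow> nat \<Rightarrow> complex) \<Rightarrow> (nat \<Rightarrow> complex) \<Rightarrow> nat \<Rightarrow> complex" where
  "orth_proj m K w z a = (\<Sum>s<K. cinner m (w s) z * w s a)"

lemma orthonormal_or_zero_coeff:
  assumes "orthonormal_or_zero m K w" "s < K"
  shows "cinner m (w s) z * cinner m (w s) (w s) = cinner m (w s) z"
proof (cases "cinner m (w s) (w s) = 1")
  case False
  then have "sqnorm m (w s) = 0"
    using assms unfolding orthonormal_or_zero_def by (auto simp: cinner_self)
  then show ?thesis by (simp add: cinner_zero_left sqnorm_eq_0D)
qed simp

lemma cinner_orth_proj:
  assumes "orthonormal_or_zero m K w" "t < K"
  shows "cinner m (w t) (orth_proj m K w z) = cinner m (w t) z"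
proof -
  have "cinner m (w t) (orth_proj m K w z) = (\<Sum>s<K. cinner m (w s) z * cinner m (w t) (w s))"
    unfolding orth_proj_def[abs_def] cinner_sum_right ..
  also have "\<dots> = cinner m (w t) z * cinner m (w t) (w t)"
    using assms by (intro sum_eq_single) (auto simp: orthonormal_or_zero_def)
  finally show ?thesis using orthonormal_or_zero_coeff[OF assms] by simp
qed

lemma orth_proj_Suc_upd:
  "orth_proj m (Suc K) (w(K := e)) z a = orth_proj m K w z a + cinner m e z * e a"
  unfolding orth_proj_def by simp

lemma cinner_orth_proj_residual:
  assumes "orthonormal_or_zero m K w" "t < K"
  shows "cinner m (w t) (\<lambda>a. z a - orth_proj m K w z a) = 0"
  using cinner_orth_proj[OF assms] by (simp add: cinner_diff_right)

lemma cinner_orthogonal_orth_proj: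
  assumes "\<And>t. t < K \<Longrightarrow> cinner m x (w t) = 0"
  shows "cinner m x (orth_proj m K w z) = 0"
  unfolding orth_proj_def[abs_def] cinner_sum_right using assms by simp

text \<open>If \<open>z\<close> already lies in the span, then \<open>r = 0\<close> and the new vector \<open>e\<close> is \<open>0\<close> (as \<open>x / 0 = 0\<close>).\<close>
lemma gram_schmidt_step:
  fixes z :: "nat \<Rightarrow> complex"
  assumes ortho: "orthonormal_or_zero m K w"
  defines "r \<equiv> \<lambda>a. z a - orth_proj m K w z a"
  defines "e \<equiv> \<lambda>a. r a / complex_of_real (sqrt (sqnorm m r))"
  shows "orthonormal_or_zero m (Suc K) (w(K := e))"
    and "a < m \<Longrightarrow> orth_proj m (Suc K) (w(K := e)) z a = z a"
    and "(\<And>a. a < m \<Longrightarrow> orth_proj m K w y a = y a) \<Longrightarrow> a < m \<Longrightarrow>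
           orth_proj m (Suc K) (w(K := e)) y a = y a"
proof -
  define \<nu> where "\<nu> = complex_of_real (sqrt (sqnorm m r))"
  have e_eq: "e = (\<lambda>a. r a / \<nu>)" unfolding e_def \<nu>_def ..
  have r_perp: "cinner m r (w t) = 0" if "t < K" for t
    using cinner_orth_proj_residual[OF ortho that, where z = z] cnj_cinner[of m "w t" r]
    unfolding r_def by simp
  have e_perp: "cinner m e (w t) = 0" "cinner m (w t) e = 0" if "t < K" for t
    using r_perp[OF that] cnj_cinner[of m r "w t"]
    by (simp_all add: e_eq cinner_divide_left cinner_divide_right)
  have rr: "cinner m r r = \<nu> * \<nu>" and cnj_\<nu>: "cnj \<nu> = \<nu>"
    unfolding \<nu>_def cinner_self using sqnorm_nonneg[of m r] by (simp_all flip: of_real_mult)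
  have rz: "cinner m r z = \<nu> * \<nu>"
    using cinner_orthogonal_orth_proj[OF r_perp, where z = z] rr
    unfolding r_def cinner_diff_right by (simp add: r_def[symmetric])
  show "orthonormal_or_zero m (Suc K) (w(K := e))"
    using ortho e_perp unfolding orthonormal_or_zero_def
    by (auto simp: less_Suc_eq e_eq cinner_divide_left cinner_divide_right rr cnj_\<nu>)
  have e_coeff: "cinner m e z * e a = r a" if "a < m" for a
  proof (cases "\<nu> = 0")
    case True
    then have "r a = 0" using that sqnorm_eq_0D[of m r] unfolding \<nu>_def by simp
    then show ?thesis by (simp add: e_eq)
  next
    case False
    then show ?thesis by (simp add: e_eq cinner_divide_left cnj_\<nu> rz)
  qed
  show "a < m \<Longrightarrow> orth_proj m (Suc K) (w(K := e)) z a = z a"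
    using e_coeff by (simp add: orth_proj_Suc_upd r_def)
  assume y: "\<And>a. a < m \<Longrightarrow> orth_proj m K w y a = y a" and "a < m"
  have "cinner m e y = cinner m e (orth_proj m K w y)"
    using y by (intro cinner_cong) auto
  also have "\<dots> = 0" using e_perp(1) by (rule cinner_orthogonal_orth_proj)
  finally show "orth_proj m (Suc K) (w(K := e)) y a = y a"
    using y \<open>a < m\<close> by (simp add: orth_proj_Suc_upd)
qed

definition lincomb :: "nat \<Rightarrow> (nat \<Rightarrow> nat \<Rightarrow> complex) \<Rightarrow> (nat \<Rightarrow> nat \<Rightarrow> complex) \<Rightarrow> nat \<Rightarrow> nat \<Rightarrow> complex"
  where "lincomb n \<Lambda> c s a = (\<Sum>j<n. \<Lambda> s j * c j a)"

lemma gram_schmidt: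
  assumes "K \<le> n"
  shows "\<exists>\<Lambda>. orthonormal_or_zero m K (lincomb n \<Lambda> c) \<and>
           (\<forall>k<K. \<forall>a<m. orth_proj m K (lincomb n \<Lambda> c) (c k) a = c k a)"
  using assms
proof (induction K)
  case 0
  show ?case by (simp add: orthonormal_or_zero_def)
next
  case (Suc K)
  then obtain \<Lambda> where ortho: "orthonormal_or_zero m K (lincomb n \<Lambda> c)"
    and recon: "\<forall>k<K. \<forall>a<m. orth_proj m K (lincomb n \<Lambda> c) (c k) a = c k a"
    by auto
  let ?w = "lincomb n \<Lambda> c"
  define \<gamma> where "\<gamma> s = cinner m (?w s) (c K)" for s
  define r where "r a = c K a - orth_proj m K ?w (c K) a" for a
  define \<nu> where "\<nu> = complex_of_real (sqrt (sqnorm m r))"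
  define \<Lambda>' where "\<Lambda>' = \<Lambda>(K := \<lambda>j. (of_bool (j = K) - (\<Sum>s<K. \<gamma> s * \<Lambda> s j)) / \<nu>)"
  have new: "lincomb n \<Lambda>' c = ?w(K := (\<lambda>a. r a / \<nu>))"
  proof (intro ext)
    fix s a
    have "lincomb n \<Lambda>' c K a = (\<Sum>j<n. (of_bool (j = K) - (\<Sum>s<K. \<gamma> s * \<Lambda> s j)) * c j a) / \<nu>"
      by (simp add: lincomb_def \<Lambda>'_def sum_divide_distrib)
    also have "\<dots> = (c K a - (\<Sum>s<K. \<gamma> s * ?w s a)) / \<nu>"
      using Suc.prems
      by (simp add: lincomb_def left_diff_distrib sum_subtractf sum_distrib_left sum_distrib_right
          mult.assoc sum.swap[of _ "{..<K}"])
    finally have "lincomb n \<Lambda>' c K a = (c K a - (\<Sum>s<K. \<gamma> s * ?w s a)) / \<nu>" .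
    then show "lincomb n \<Lambda>' c s a = (?w(K := (\<lambda>a. r a / \<nu>))) s a"
      by (cases "s = K") (simp_all add: \<Lambda>'_def lincomb_def r_def orth_proj_def \<gamma>_def)
  qed
  note step = gram_schmidt_step[OF ortho, where z = "c K", folded new[unfolded r_def[abs_def] \<nu>_def]]
  show ?case
  proof (intro exI[of _ \<Lambda>'] conjI allI impI)
    show "orthonormal_or_zero m (Suc K) (lincomb n \<Lambda>' c)" by (rule step(1))
    fix k a assume "k < Suc K" "a < m"
    then show "orth_proj m (Suc K) (lincomb n \<Lambda>' c) (c k) a = c k a"
      using step(2,3) recon by (auto simp: less_Suc_eq)
  qed
qed

lemma cinner_orth_proj_left:
  "cinner m (orth_proj m K w z) y = (\<Sum>s<K. cnj (cinner m (w s) z) * cinner m (w s) y)"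
  unfolding orth_proj_def[abs_def] cinner_sum_left ..

lemma sqnorm_orth_proj:
  assumes "orthonormal_or_zero m K w"
  shows "cinner m (orth_proj m K w z) (orth_proj m K w z) = of_real (\<Sum>s<K. (cmod (cinner m (w s) z))\<^sup>2)"
    and "cinner m (orth_proj m K w z) z = of_real (\<Sum>s<K. (cmod (cinner m (w s) z))\<^sup>2)"
  unfolding cinner_orth_proj_left using cinner_orth_proj[OF assms]
  by (simp_all add: cnj_mult_self)

lemma bessel_inequality:
  assumes "orthonormal_or_zero m K w"
  shows "(\<Sum>s<K. (cmod (cinner m (w s) z))\<^sup>2) \<le> sqnorm m z"
proof -
  let ?P = "orth_proj m K w z" and ?B = "\<Sum>s<K. (cmod (cinner m (w s) z))\<^sup>2"
  have "complex_of_real (sqnorm m (\<lambda>a. z a - ?P a)) =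
      cinner m z z - cnj (cinner m ?P z) - cinner m ?P z + cinner m ?P ?P"
    unfolding cinner_self[symmetric] cinner_diff_left cinner_diff_right cnj_cinner by simp
  also have "\<dots> = complex_of_real (sqnorm m z - ?B)"
    unfolding sqnorm_orth_proj[OF assms] by (simp add: cinner_self)
  finally show ?thesis using sqnorm_nonneg[of m "\<lambda>a. z a - ?P a"] by (simp only: of_real_eq_iff)
qed

lemma cinner_lincomb_left:
  "cinner m (lincomb n \<Lambda> c s) y = (\<Sum>j<n. cnj (\<Lambda> s j) * cinner m (c j) y)"
  unfolding lincomb_def[abs_def] cinner_sum_left ..

lemma cinner_lincomb_lincomb:
  "cinner m (lincomb n \<Lambda> c s) (lincomb n \<Lambda> c t) =
     (\<Sum>j<n. cnj (\<Lambda> s j) * (\<Sum>k<n. \<Lambda> t k * cinner m (c j) (c k)))"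
  unfolding cinner_lincomb_left by (simp only: lincomb_def[abs_def] cinner_sum_right)

lemma gram_eq_lincomb:
  fixes c d :: "nat \<Rightarrow> nat \<Rightarrow> complex"
  assumes "\<forall>j<n. \<forall>k<n. cinner m (c j) (c k) = cinner N (d j) (d k)"
  shows "k < n \<Longrightarrow> cinner N (lincomb n \<Lambda> d s) (d k) = cinner m (lincomb n \<Lambda> c s) (c k)"
    and "cinner N (lincomb n \<Lambda> d s) (lincomb n \<Lambda> d t) = cinner m (lincomb n \<Lambda> c s) (lincomb n \<Lambda> c t)"
proof -
  show "k < n \<Longrightarrow> cinner N (lincomb n \<Lambda> d s) (d k) = cinner m (lincomb n \<Lambda> c s) (c k)"
    using assms by (simp add: cinner_lincomb_left)
  show "cinner N (lincomb n \<Lambda> d s) (lincomb n \<Lambda> d t) = cinner m (lincomb n \<Lambda> c s) (lincomb n \<Lambda> c t)"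
    unfolding cinner_lincomb_lincomb using assms by (auto intro!: sum.cong)
qed

definition is_contraction :: "nat \<Rightarrow> nat \<Rightarrow> (nat \<Rightarrow> nat \<Rightarrow> complex) \<Rightarrow> bool" where
  "is_contraction m N V \<longleftrightarrow> (\<forall>z. (\<Sum>i<N. (cmod (cinner m (\<lambda>a. V a i) z))\<^sup>2) \<le> sqnorm m z)"

lemma is_contraction_outer_sum:
  assumes ortho: "orthonormal_or_zero m K w"
    and gram: "\<forall>s<K. \<forall>t<K. cinner N (u s) (u t) = cinner m (w s) (w t)"
  shows "is_contraction m N (\<lambda>a i. \<Sum>s<K. w s a * cnj (u s i))"
  unfolding is_contraction_def
proof
  fix z
  define g where "g s = cinner m (w s) z" for s
  have "cinner m (\<lambda>a. \<Sum>s<K. w s a * cnj (u s i)) z = (\<Sum>s<K. g s * u s i)" for i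
    unfolding g_def cinner_def
    by (simp add: sum_distrib_left sum_distrib_right ac_simps) (rule sum.swap)
  then have "complex_of_real (\<Sum>i<N. (cmod (cinner m (\<lambda>a. \<Sum>s<K. w s a * cnj (u s i)) z))\<^sup>2) =
      cinner N (\<lambda>i. \<Sum>s<K. g s * u s i) (\<lambda>i. \<Sum>s<K. g s * u s i)"
    by (simp add: cinner_self sqnorm_def)
  also have "\<dots> = cinner m (orth_proj m K w z) (orth_proj m K w z)"
    unfolding orth_proj_def[abs_def] cinner_sum_left cinner_sum_right g_def using gram by simp
  also have "\<dots> = complex_of_real (\<Sum>s<K. (cmod (g s))\<^sup>2)"
    unfolding sqnorm_orth_proj(1)[OF ortho] g_def ..
  finally have "(\<Sum>i<N. (cmod (cinner m (\<lambda>a. \<Sum>s<K. w s a * cnj (u s i)) z))\<^sup>2) = (\<Sum>s<K. (cmod (g s))\<^sup>2)"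
    by (simp only: of_real_eq_iff)
  also have "\<dots> \<le> sqnorm m z"
    unfolding g_def by (rule bessel_inequality[OF ortho])
  finally show "(\<Sum>i<N. (cmod (cinner m (\<lambda>a. \<Sum>s<K. w s a * cnj (u s i)) z))\<^sup>2) \<le> sqnorm m z" .
qed

text \<open>Gram--Schmidt on \<open>c\<close> with recorded coefficients \<open>\<Lambda>\<close>; the same coefficients applied to \<open>d\<close>
  give a family \<open>u\<close> with the Gram matrix of \<open>w\<close>, and \<open>V = \<Sum>\<^sub>s |w\<^sub>s\<rangle>\<langle>u\<^sub>s|\<close> maps each \<open>d\<^sub>k\<close> to \<open>c\<^sub>k\<close>.\<close>
lemma gram_eq_imp_contraction:
  fixes c d :: "nat \<Rightarrow> nat \<Rightarrow> complex"
  assumes G: "\<forall>j<n. \<forall>k<n. cinner m (c j) (c k) = cinner N (d j) (d k)"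
  shows "\<exists>V. is_contraction m N V \<and> (\<forall>k<n. \<forall>a<m. (\<Sum>i<N. V a i * d k i) = c k a)"
proof -
  obtain \<Lambda> where ortho: "orthonormal_or_zero m n (lincomb n \<Lambda> c)"
    and recon: "\<forall>k<n. \<forall>a<m. orth_proj m n (lincomb n \<Lambda> c) (c k) a = c k a"
    using gram_schmidt[of n n m c] by auto
  define V where "V a i = (\<Sum>s<n. lincomb n \<Lambda> c s a * cnj (lincomb n \<Lambda> d s i))" for a i
  have "is_contraction m N V"
    unfolding V_def[abs_def] using ortho gram_eq_lincomb(2)[OF G]
    by (intro is_contraction_outer_sum) auto
  moreover have "(\<Sum>i<N. V a i * d k i) = c k a" if "k < n" "a < m" for k a
  proof -
    have "(\<Sum>i<N. V a i * d k i) = (\<Sum>s<n. lincomb n \<Lambda> c s a * cinner N (lincomb n \<Lambda> d s) (d k))"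
      unfolding V_def cinner_def
      by (simp add: sum_distrib_left sum_distrib_right mult.assoc sum.swap[of _ "{..<N}"])
    also have "\<dots> = orth_proj m n (lincomb n \<Lambda> c) (c k) a"
      using gram_eq_lincomb(1)[OF G that(1)] by (simp add: orth_proj_def mult.commute)
    finally show ?thesis using recon that by simp
  qed
  ultimately show ?thesis by blast
qed

section \<open>Decoding measurements\<close>

lemma qform_add: "qform m (\<lambda>a b. E a b + F a b) x = qform m E x + qform m F x"
  unfolding qform_def by (simp add: algebra_simps sum.distrib)

lemma qform_diff: "qform m (\<lambda>a b. E a b - F a b) x = qform m E x - qform m F x"
  unfolding qform_def by (simp add: algebra_simps sum_subtractf)

lemma qform_scale: "qform m (\<lambda>a b. c * E a b) x = c * qform m E x"
  unfolding qform_def by (simp add: sum_distrib_left ac_simps)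

lemma qform_sum: "qform m (\<lambda>a b. \<Sum>j\<in>J. E j a b) x = (\<Sum>j\<in>J. qform m (E j) x)"
proof -
  have "qform m (\<lambda>a b. \<Sum>j\<in>J. E j a b) x = (\<Sum>a<m. \<Sum>b<m. \<Sum>j\<in>J. cnj (x a) * E j a b * x b)"
    unfolding qform_def by (simp add: sum_distrib_left sum_distrib_right)
  also have "\<dots> = (\<Sum>a<m. \<Sum>j\<in>J. \<Sum>b<m. cnj (x a) * E j a b * x b)"
    by (intro sum.cong refl) (rule sum.swap)
  also have "\<dots> = (\<Sum>j\<in>J. qform m (E j) x)"
    unfolding qform_def by (rule sum.swap)
  finally show ?thesis .
qed

lemma qform_rank1: "qform m (\<lambda>a b. g a * cnj (g b)) x = complex_of_real ((cmod (cinner m g x))\<^sup>2)"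
  unfolding qform_def cinner_def cnj_mult_self[symmetric] cnj_sum sum_product
  by (intro sum.cong refl) (simp add: ac_simps)

lemma qform_id: "qform m (\<lambda>a b. if a = b then 1 else 0) x = complex_of_real (sqnorm m x)"
proof -
  have "(\<Sum>b<m. cnj (x a) * (if a = b then 1 else 0) * x b) = cnj (x a) * x a" if "a < m" for a
    using that by (simp add: sum_eq_single[where s = a])
  then show ?thesis unfolding qform_def sqnorm_def by (simp add: cnj_mult_self)
qed

definition decoder_povm :: "nat \<Rightarrow> (nat \<Rightarrow> nat \<Rightarrow> complex) \<Rightarrow> nat \<Rightarrow> nat \<Rightarrow> nat \<Rightarrow> complex" where
  "decoder_povm N V i a a' = V a i * cnj (V a' i) +
     (if i = 0 then (if a = a' then 1 else 0) - (\<Sum>j<N. V a j * cnj (V a' j)) else 0)"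

lemma qform_decoder_povm:
  "qform m (decoder_povm N V i) x = complex_of_real ((cmod (cinner m (\<lambda>a. V a i) x))\<^sup>2 +
      (if i = 0 then sqnorm m x - (\<Sum>j<N. (cmod (cinner m (\<lambda>a. V a j) x))\<^sup>2) else 0))"
proof (cases "i = 0")
  case True
  have "decoder_povm N V i = (\<lambda>a b. V a i * cnj (V b i) +
      ((if a = b then 1 else 0) - (\<Sum>j<N. V a j * cnj (V b j))))"
    unfolding decoder_povm_def using True by (intro ext) simp
  then show ?thesis
    using True by (simp only: qform_add qform_diff qform_sum qform_id qform_rank1) simp
next
  case False
  have "decoder_povm N V i = (\<lambda>a b. V a i * cnj (V b i))"
    unfolding decoder_povm_def using False by (intro ext) simp
  then show ?thesis using False by (simp add: qform_rank1)
qed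

lemma psd_decoder_povm: "is_contraction m N V \<Longrightarrow> psd m (decoder_povm N V i)"
  unfolding psd_def qform_decoder_povm is_contraction_def by (simp add: Reals_of_real)

lemma sum_decoder_povm:
  assumes "0 < N"
  shows "(\<Sum>i<N. decoder_povm N V i a a') = (if a = a' then 1 else 0)"
  using assms by (simp add: decoder_povm_def sum.distrib)

lemma sum_qform_decoder_povm:
  assumes "0 < N"
  shows "(\<Sum>i<N. qform m (decoder_povm N V i) x) = complex_of_real (sqnorm m x)"
  unfolding qform_sum[symmetric] sum_decoder_povm[OF assms] qform_id ..

text \<open>\<open>V\<close> maps the standard purification \<open>\<Sum>\<^sub>i \<surd>p i |i\<rangle>|v i\<rangle>\<close> of the mixture to \<open>\<phi>\<close>.\<close>
definition is_decoder :: "nat \<Rightarrow> nat \<Rightarrow> nat \<Rightarrow> (nat \<Rightarrow> real) \<Rightarrow> (nat \<Rightarrow> nat \<Rightarrow> complex) \<Rightarrow>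
    (nat \<Rightarrow> nat \<Rightarrow> complex) \<Rightarrow> (nat \<Rightarrow> nat \<Rightarrow> complex) \<Rightarrow> bool" where
  "is_decoder m n N p v V \<phi> \<longleftrightarrow> is_contraction m N V \<and>
     (\<forall>k<n. \<forall>a<m. (\<Sum>i<N. V a i * (complex_of_real (sqrt (p i)) * v i k)) = \<phi> a k)"

lemma bi_inner_decoder_expand:
  assumes "is_decoder m n N p v V \<phi>"
  shows "bi_inner m n \<phi> \<chi> =
    (\<Sum>i<N. complex_of_real (sqrt (p i)) * cinner m (\<lambda>a. V a i) (\<lambda>a. \<Sum>k<n. cnj (v i k) * \<chi> a k))"
proof -
  have "bi_inner m n \<phi> \<chi> =
      (\<Sum>a<m. \<Sum>k<n. \<Sum>i<N. complex_of_real (sqrt (p i)) * (cnj (V a i) * (cnj (v i k) * \<chi> a k)))"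
    unfolding bi_inner_def using conjunct2[OF assms[unfolded is_decoder_def], rule_format, symmetric]
    by (simp add: cnj_sum sum_distrib_left sum_distrib_right ac_simps)
  also have "\<dots> = (\<Sum>a<m. \<Sum>i<N. \<Sum>k<n. complex_of_real (sqrt (p i)) * (cnj (V a i) * (cnj (v i k) * \<chi> a k)))"
    by (rule sum.cong[OF refl]) (rule sum.swap)
  also have "\<dots> = (\<Sum>i<N. complex_of_real (sqrt (p i)) * cinner m (\<lambda>a. V a i) (\<lambda>a. \<Sum>k<n. cnj (v i k) * \<chi> a k))"
    unfolding cinner_def by (subst sum.swap) (simp add: sum_distrib_left)
  finally show ?thesis .
qed

text \<open>\<open>\<langle>\<phi>|\<chi>\<rangle> = \<Sum>\<^sub>i \<surd>p i \<langle>V|i\<rangle> \<otimes> v i | \<chi>\<rangle>\<close>, and Cauchy--Schwarz in \<open>i\<close>.\<close>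
lemma bi_inner_le_decoder_pass:
  assumes V: "is_decoder m n N p v V \<phi>" and p: "\<forall>i<N. p i \<ge> 0" "(\<Sum>i<N. p i) = 1"
  shows "(cmod (bi_inner m n \<phi> \<chi>))\<^sup>2 \<le>
    (\<Sum>i<N. Re (qform m (decoder_povm N V i) (\<lambda>a. \<Sum>k<n. cnj (v i k) * \<chi> a k)))"
proof -
  define h where "h i = cinner m (\<lambda>a. V a i) (\<lambda>a. \<Sum>k<n. cnj (v i k) * \<chi> a k)" for i
  have "(cmod (bi_inner m n \<phi> \<chi>))\<^sup>2 \<le>
      (\<Sum>i<N. (cmod (complex_of_real (sqrt (p i))))\<^sup>2) * (\<Sum>i<N. (cmod (h i))\<^sup>2)"
    using complex_Cauchy_Schwarz_sum[of "\<lambda>i. complex_of_real (sqrt (p i))" h "{..<N}"]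
    unfolding bi_inner_decoder_expand[OF V] h_def by simp
  also have "(\<Sum>i<N. (cmod (complex_of_real (sqrt (p i))))\<^sup>2) = 1"
    using p by simp
  also have "1 * (\<Sum>i<N. (cmod (h i))\<^sup>2) \<le>
      (\<Sum>i<N. Re (qform m (decoder_povm N V i) (\<lambda>a. \<Sum>k<n. cnj (v i k) * \<chi> a k)))"
    using V unfolding qform_decoder_povm h_def is_decoder_def is_contraction_def
    by (auto intro!: sum_mono)
  finally show ?thesis .
qed

section \<open>Reveal strategies controlled by a qubit\<close>

lemma sum_lessThan_double: "(\<Sum>a'<2 * m. g a') = (\<Sum>a<m. g (2 * a) + g (2 * a + 1))" for m :: nat
  by (induction m) (simp_all add: sum.distrib ac_simps)

lemma odd_double_mod_div: "Suc (a * 2) mod 2 = 1" "Suc (a * 2) div 2 = a" for a :: nat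
  by presburger+

text \<open>Alice's register \<open>\<complex>\<^sup>2 \<otimes> \<complex>\<^sup>m\<close> is encoded as \<open>\<complex>\<^sup>2\<^sup>m\<close>, index \<open>2 a + q\<close> standing for
  \<open>|q\<rangle>|a\<rangle>\<close>.\<close>
definition qubit_tensor :: "(nat \<Rightarrow> real) \<Rightarrow> (nat \<Rightarrow> nat \<Rightarrow> complex) \<Rightarrow> nat \<Rightarrow> nat \<Rightarrow> complex" where
  "qubit_tensor g F a' a'' = complex_of_real (g (a' mod 2) * g (a'' mod 2)) * F (a' div 2) (a'' div 2)"

definition qubit_superpose ::
  "real \<Rightarrow> real \<Rightarrow> (nat \<Rightarrow> nat \<Rightarrow> complex) \<Rightarrow> (nat \<Rightarrow> nat \<Rightarrow> complex) \<Rightarrow> nat \<Rightarrow> nat \<Rightarrow> complex" where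
  "qubit_superpose x y \<phi>0 \<phi>1 a' k =
     (if even a' then complex_of_real x * \<phi>0 (a' div 2) k else complex_of_real y * \<phi>1 (a' div 2) k)"

lemma qform_qubit_tensor:
  "qform (2 * m) (qubit_tensor g F) x =
     qform m F (\<lambda>a. complex_of_real (g 0) * x (2 * a) + complex_of_real (g 1) * x (2 * a + 1))"
proof -
  have "qform (2 * m) (qubit_tensor g F) x = (\<Sum>a<m. \<Sum>b<m.
      cnj (x (2*a)) * qubit_tensor g F (2*a) (2*b) * x (2*b) +
      cnj (x (2*a)) * qubit_tensor g F (2*a) (2*b+1) * x (2*b+1) +
      (cnj (x (2*a+1)) * qubit_tensor g F (2*a+1) (2*b) * x (2*b) +
       cnj (x (2*a+1)) * qubit_tensor g F (2*a+1) (2*b+1) * x (2*b+1)))"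
    unfolding qform_def sum_lessThan_double by (simp add: sum.distrib)
  also have "\<dots> = qform m F (\<lambda>a. complex_of_real (g 0) * x (2 * a) + complex_of_real (g 1) * x (2 * a + 1))"
    unfolding qform_def qubit_tensor_def
    by (intro sum.cong refl) (simp add: algebra_simps odd_double_mod_div)
  finally show ?thesis .
qed

lemma psd_qubit_tensor: "psd m F \<Longrightarrow> psd (2 * m) (qubit_tensor g F)"
  unfolding psd_def qform_qubit_tensor by blast

lemma qubit_project_superpose:
  "(\<lambda>a. complex_of_real (g 0) * qubit_superpose x y \<phi>0 \<phi>1 (2 * a) k +
        complex_of_real (g 1) * qubit_superpose x y \<phi>0 \<phi>1 (2 * a + 1) k) =
   (\<lambda>a. complex_of_real (g 0 * x) * \<phi>0 a k + complex_of_real (g 1 * y) * \<phi>1 a k)"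
  by (simp add: qubit_superpose_def mult.assoc)

lemma prob_send_qubit_tensor:
  "prob_send (2 * m) n (qubit_superpose x y \<phi>0 \<phi>1) (qubit_tensor g F) =
     Re (\<Sum>k<n. qform m F (\<lambda>a. complex_of_real (g 0 * x) * \<phi>0 a k + complex_of_real (g 1 * y) * \<phi>1 a k))"
  unfolding prob_send_def qform_qubit_tensor qubit_project_superpose ..

lemma prob_send_pass_qubit_tensor:
  "prob_send_pass (2 * m) n (qubit_superpose x y \<phi>0 \<phi>1) (qubit_tensor g F) w =
     Re (qform m F (\<lambda>a. \<Sum>k<n. cnj (w k) *
       (complex_of_real (g 0 * x) * \<phi>0 a k + complex_of_real (g 1 * y) * \<phi>1 a k)))"
  unfolding prob_send_pass_def qform_qubit_tensor
  by (simp add: qubit_superpose_def sum_distrib_left sum.distrib algebra_simps)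

lemma bi_sqnorm_qubit_superpose:
  "(\<Sum>a'<2 * m. \<Sum>k<n. (cmod (qubit_superpose x y \<phi>0 \<phi>1 a' k))\<^sup>2) =
     x\<^sup>2 * (\<Sum>a<m. \<Sum>k<n. (cmod (\<phi>0 a k))\<^sup>2) + y\<^sup>2 * (\<Sum>a<m. \<Sum>k<n. (cmod (\<phi>1 a k))\<^sup>2)"
  unfolding sum_lessThan_double qubit_superpose_def
  by (simp add: norm_mult power_mult_distrib sum.distrib sum_distrib_left)

lemma bi_inner_real_lincomb:
  fixes A B :: real
  assumes "bi_inner m n \<phi>0 \<phi>0 = 1" "bi_inner m n \<phi>1 \<phi>1 = 1" "bi_inner m n \<phi>0 \<phi>1 = complex_of_real c"
  defines "\<chi> \<equiv> \<lambda>a k. complex_of_real A * \<phi>0 a k + complex_of_real B * \<phi>1 a k"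
  shows "bi_inner m n \<phi>0 \<chi> = complex_of_real (A + B * c)"
    and "bi_inner m n \<phi>1 \<chi> = complex_of_real (A * c + B)"
    and "bi_inner m n \<chi> \<chi> = complex_of_real (A\<^sup>2 + B\<^sup>2 + 2 * A * B * c)"
proof -
  have c10: "bi_inner m n \<phi>1 \<phi>0 = complex_of_real c"
    using assms(3) cnj_bi_inner[of m n \<phi>0 \<phi>1] by simp
  show 0: "bi_inner m n \<phi>0 \<chi> = complex_of_real (A + B * c)"
    unfolding \<chi>_def bi_inner_lincomb_right assms(1,3) by simp
  show 1: "bi_inner m n \<phi>1 \<chi> = complex_of_real (A * c + B)"
    unfolding \<chi>_def bi_inner_lincomb_right assms(2) c10 by simp
  show "bi_inner m n \<chi> \<chi> = complex_of_real (A\<^sup>2 + B\<^sup>2 + 2 * A * B * c)"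
    by (subst (1) \<chi>_def, unfold bi_inner_lincomb_left 0 1)
      (simp add: algebra_simps power2_eq_square flip: of_real_mult of_real_add)
qed

lemma sum_prob_send_decoder:
  assumes "0 < N"
  shows "(\<Sum>i<N. Re (\<Sum>k<n. qform m (decoder_povm N V i) (\<lambda>a. \<chi> a k))) = Re (bi_inner m n \<chi> \<chi>)"
proof -
  have "(\<Sum>i<N. Re (\<Sum>k<n. qform m (decoder_povm N V i) (\<lambda>a. \<chi> a k))) =
      Re (\<Sum>k<n. \<Sum>i<N. qform m (decoder_povm N V i) (\<lambda>a. \<chi> a k))"
    by (simp add: sum.swap[of _ "{..<n}"])
  also have "\<dots> = (\<Sum>k<n. sqnorm m (\<lambda>a. \<chi> a k))"
    unfolding sum_qform_decoder_povm[OF assms] by simp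
  finally show ?thesis
    unfolding bi_inner_self sqnorm_def by (simp add: sum.swap[of _ "{..<n}"])
qed

lemma decoder_detect_le:
  assumes V: "is_decoder m n N p v V \<phi>" and mix: "is_mixture n N p v"
  shows "(\<Sum>i<N. Re (\<Sum>k<n. qform m (decoder_povm N V i) (\<lambda>a. \<chi> a k)) -
              Re (qform m (decoder_povm N V i) (\<lambda>a. \<Sum>k<n. cnj (v i k) * \<chi> a k)))
    \<le> Re (bi_inner m n \<chi> \<chi>) - (cmod (bi_inner m n \<phi> \<chi>))\<^sup>2"
proof -
  have "0 < N" using mix unfolding is_mixture_def by (cases N) auto
  then show ?thesis
    using bi_inner_le_decoder_pass[OF V, of \<chi>] mix
    unfolding sum_subtractf sum_prob_send_decoder[OF \<open>0 < N\<close>] is_mixture_def by simp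
qed

definition rotated_basis :: "real \<Rightarrow> nat \<Rightarrow> nat \<Rightarrow> real" where
  "rotated_basis \<theta> b q =
     (if b = 0 then (if q = 0 then cos \<theta> else sin \<theta>) else (if q = 0 then - sin \<theta> else cos \<theta>))"

text \<open>Alice measures her qubit in the basis rotated by \<open>\<theta>\<close>, announces the outcome \<open>b\<close>, and then
  obtains \<open>i\<close> from the decoder POVM of \<open>\<rho>\<^sub>b\<close>.\<close>
definition rotated_reveal :: "(nat \<Rightarrow> nat) \<Rightarrow> (nat \<Rightarrow> nat \<Rightarrow> nat \<Rightarrow> complex) \<Rightarrow> real \<Rightarrow>
    nat \<Rightarrow> nat \<Rightarrow> nat \<Rightarrow> nat \<Rightarrow> complex" where
  "rotated_reveal N V \<theta> b i = qubit_tensor (rotated_basis \<theta> b) (decoder_povm (N b) (V b) i)"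

lemma rotated_basis_simps:
  "rotated_basis \<theta> 0 0 = cos \<theta>" "rotated_basis \<theta> 0 1 = sin \<theta>"
  "rotated_basis \<theta> 1 0 = - sin \<theta>" "rotated_basis \<theta> 1 1 = cos \<theta>"
  by (simp_all add: rotated_basis_def)

lemma sum_two: "(\<Sum>b<2. f b) = f 0 + f (1::nat)"
  by (simp add: numeral_2_eq_2)

lemma reveal_povm_rotated_reveal:
  assumes "\<forall>b<2. is_contraction m (N b) (V b) \<and> 0 < N b"
  shows "reveal_povm (2 * m) N (rotated_reveal N V \<theta>)"
  unfolding reveal_povm_def
proof (intro conjI allI impI)
  fix b i :: nat assume "b < 2"
  then show "psd (2 * m) (rotated_reveal N V \<theta> b i)"
    using assms unfolding rotated_reveal_def by (blast intro: psd_qubit_tensor psd_decoder_povm)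
next
  fix a' a'' :: nat
  have basis: "(\<Sum>b<2. rotated_basis \<theta> b q * rotated_basis \<theta> b r) = (if q = r then 1 else 0)"
    if "q < 2" "r < 2" for q r :: nat
    using that by (auto simp: sum_two rotated_basis_def less_2_cases_iff power2_eq_square[symmetric])
  have "(\<Sum>b<2. \<Sum>i<N b. rotated_reveal N V \<theta> b i a' a'') =
      (\<Sum>b<2. complex_of_real (rotated_basis \<theta> b (a' mod 2) * rotated_basis \<theta> b (a'' mod 2)) *
               (\<Sum>i<N b. decoder_povm (N b) (V b) i (a' div 2) (a'' div 2)))"
    unfolding rotated_reveal_def qubit_tensor_def by (simp add: sum_distrib_left)
  also have "\<dots> = complex_of_real (\<Sum>b<2. rotated_basis \<theta> b (a' mod 2) * rotated_basis \<theta> b (a'' mod 2)) *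
      (if a' div 2 = a'' div 2 then 1 else 0)"
    using assms by (simp add: sum_decoder_povm sum_distrib_right)
  also have "\<dots> = (if a' = a'' then 1 else 0)"
  proof -
    have "a' = a'' \<longleftrightarrow> a' div 2 = a'' div 2 \<and> a' mod 2 = a'' mod 2"
      by (metis div_mult_mod_eq)
    then show ?thesis by (simp add: basis)
  qed
  finally show "(\<Sum>b<2. \<Sum>i<N b. rotated_reveal N V \<theta> b i a' a'') = (if a' = a'' then 1 else 0)" .
qed

lemma prob_reveal0_rotated_reveal:
  assumes "0 < N 0" and "bi_inner m n \<phi>0 \<phi>0 = 1" "bi_inner m n \<phi>1 \<phi>1 = 1"
    and "bi_inner m n \<phi>0 \<phi>1 = complex_of_real c"
  shows "prob_reveal0 (2 * m) n N (qubit_superpose x y \<phi>0 \<phi>1) (rotated_reveal N V \<theta>) =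
    (cos \<theta> * x)\<^sup>2 + (sin \<theta> * y)\<^sup>2 + 2 * (cos \<theta> * x) * (sin \<theta> * y) * c"
  unfolding prob_reveal0_def rotated_reveal_def prob_send_qubit_tensor sum_prob_send_decoder[OF assms(1)]
    rotated_basis_simps bi_inner_real_lincomb(3)[OF assms(2-4)] by simp

lemma qubit_decoder_detect_le:
  fixes g :: "nat \<Rightarrow> real" and x y :: real and \<phi>0 \<phi>1 :: "nat \<Rightarrow> nat \<Rightarrow> complex"
  assumes "is_decoder m n N p v V \<phi>" "is_mixture n N p v"
  defines "\<chi> \<equiv> \<lambda>a k. complex_of_real (g 0 * x) * \<phi>0 a k + complex_of_real (g 1 * y) * \<phi>1 a k"
  shows "(\<Sum>i<N. prob_send (2 * m) n (qubit_superpose x y \<phi>0 \<phi>1) (qubit_tensor g (decoder_povm N V i)) -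
      prob_send_pass (2 * m) n (qubit_superpose x y \<phi>0 \<phi>1) (qubit_tensor g (decoder_povm N V i)) (v i))
    \<le> Re (bi_inner m n \<chi> \<chi>) - (cmod (bi_inner m n \<phi> \<chi>))\<^sup>2"
  using decoder_detect_le[OF assms(1,2), of \<chi>]
  unfolding prob_send_qubit_tensor prob_send_pass_qubit_tensor \<chi>_def .

lemma prob_detect_rotated_reveal:
  assumes dec0: "is_decoder m n (N 0) (p 0) (v 0) (V 0) \<phi>0"
    and dec1: "is_decoder m n (N 1) (p 1) (v 1) (V 1) \<phi>1"
    and mix0: "is_mixture n (N 0) (p 0) (v 0)" and mix1: "is_mixture n (N 1) (p 1) (v 1)"
    and norm: "bi_inner m n \<phi>0 \<phi>0 = 1" "bi_inner m n \<phi>1 \<phi>1 = 1"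
    and c: "bi_inner m n \<phi>0 \<phi>1 = complex_of_real c" and xy: "x\<^sup>2 + y\<^sup>2 = 1"
  shows "prob_detect (2 * m) n N v (qubit_superpose x y \<phi>0 \<phi>1) (rotated_reveal N V \<theta>)
    \<le> (1 - c\<^sup>2) * (sin \<theta>)\<^sup>2"
proof -
  note lin = bi_inner_real_lincomb[OF norm c]
  let ?\<psi> = "qubit_superpose x y \<phi>0 \<phi>1" and ?E = "rotated_reveal N V \<theta>"
  have part0: "(\<Sum>i<N 0. prob_send (2 * m) n ?\<psi> (?E 0 i) - prob_send_pass (2 * m) n ?\<psi> (?E 0 i) (v 0 i))
    \<le> (cos \<theta> * x)\<^sup>2 + (sin \<theta> * y)\<^sup>2 + 2 * (cos \<theta> * x) * (sin \<theta> * y) * c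
          - (cos \<theta> * x + sin \<theta> * y * c)\<^sup>2"
    using qubit_decoder_detect_le[OF dec0 mix0, of x y \<phi>0 \<phi>1 "rotated_basis \<theta> 0"]
    unfolding rotated_reveal_def rotated_basis_simps lin Re_complex_of_real norm_of_real power2_abs .
  have part1: "(\<Sum>i<N 1. prob_send (2 * m) n ?\<psi> (?E 1 i) - prob_send_pass (2 * m) n ?\<psi> (?E 1 i) (v 1 i))
    \<le> (- sin \<theta> * x)\<^sup>2 + (cos \<theta> * y)\<^sup>2 + 2 * (- sin \<theta> * x) * (cos \<theta> * y) * c
          - (- sin \<theta> * x * c + cos \<theta> * y)\<^sup>2"
    using qubit_decoder_detect_le[OF dec1 mix1, of x y \<phi>0 \<phi>1 "rotated_basis \<theta> 1"]
    unfolding rotated_reveal_def rotated_basis_simps lin Re_complex_of_real norm_of_real power2_abs .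
  have "prob_detect (2 * m) n N v ?\<psi> ?E
    \<le> ((cos \<theta> * x)\<^sup>2 + (sin \<theta> * y)\<^sup>2 + 2 * (cos \<theta> * x) * (sin \<theta> * y) * c
          - (cos \<theta> * x + sin \<theta> * y * c)\<^sup>2) +
      ((- sin \<theta> * x)\<^sup>2 + (cos \<theta> * y)\<^sup>2 + 2 * (- sin \<theta> * x) * (cos \<theta> * y) * c
          - (- sin \<theta> * x * c + cos \<theta> * y)\<^sup>2)"
    unfolding prob_detect_def sum_two using part0 part1 by (rule add_mono)
  also have "\<dots> = (1 - c\<^sup>2) * (sin \<theta>)\<^sup>2 * (x\<^sup>2 + y\<^sup>2)"
    by (simp add: algebra_simps power2_eq_square)
  finally show ?thesis unfolding xy by simp
qed

definition povm_mix :: "real \<Rightarrow> (nat \<Rightarrow> nat \<Rightarrow> nat \<Rightarrow> nat \<Rightarrow> complex) \<Rightarrow>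
    (nat \<Rightarrow> nat \<Rightarrow> nat \<Rightarrow> nat \<Rightarrow> complex) \<Rightarrow> nat \<Rightarrow> nat \<Rightarrow> nat \<Rightarrow> nat \<Rightarrow> complex" where
  "povm_mix t E E' b i a a' = complex_of_real t * E b i a a' + complex_of_real (1 - t) * E' b i a a'"

lemma qform_povm_mix:
  "qform m (povm_mix t E E' b i) x =
     complex_of_real t * qform m (E b i) x + complex_of_real (1 - t) * qform m (E' b i) x"
proof -
  have "povm_mix t E E' b i = (\<lambda>a a'. complex_of_real t * E b i a a' + complex_of_real (1 - t) * E' b i a a')"
    unfolding povm_mix_def by (intro ext) simp
  then show ?thesis by (simp only: qform_add qform_scale)
qed

lemma reveal_povm_mix:
  assumes t: "0 \<le> t" "t \<le> 1" and E: "reveal_povm m N E" and E': "reveal_povm m N E'"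
  shows "reveal_povm m N (povm_mix t E E')"
  unfolding reveal_povm_def
proof (intro conjI allI impI)
  fix b i assume "b < 2" "i < N b"
  show "psd m (povm_mix t E E' b i)"
    unfolding psd_def
  proof
    fix x
    have "qform m (E b i) x \<in> \<real>" "0 \<le> Re (qform m (E b i) x)"
        "qform m (E' b i) x \<in> \<real>" "0 \<le> Re (qform m (E' b i) x)"
      using E E' \<open>b < 2\<close> \<open>i < N b\<close> unfolding reveal_povm_def psd_def by auto
    with t show "qform m (povm_mix t E E' b i) x \<in> \<real> \<and> 0 \<le> Re (qform m (povm_mix t E E' b i) x)"
      unfolding qform_povm_mix by simp
  qed
next
  fix a a' assume "a < m" "a' < m"
  with E E' have "(\<Sum>b<2. \<Sum>i<N b. E b i a a') = (if a = a' then 1 else 0)"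
      "(\<Sum>b<2. \<Sum>i<N b. E' b i a a') = (if a = a' then 1 else 0)"
    unfolding reveal_povm_def by auto
  then show "(\<Sum>b<2. \<Sum>i<N b. povm_mix t E E' b i a a') = (if a = a' then 1 else 0)"
    unfolding povm_mix_def sum.distrib by (simp flip: sum_distrib_left of_real_add)
qed

lemma prob_send_povm_mix:
  "prob_send m n \<psi> (povm_mix t E E' b i) = t * prob_send m n \<psi> (E b i) + (1 - t) * prob_send m n \<psi> (E' b i)"
  unfolding prob_send_def qform_povm_mix by (simp add: sum.distrib flip: sum_distrib_left)

lemma prob_send_pass_povm_mix:
  "prob_send_pass m n \<psi> (povm_mix t E E' b i) w =
     t * prob_send_pass m n \<psi> (E b i) w + (1 - t) * prob_send_pass m n \<psi> (E' b i) w"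
  unfolding prob_send_pass_def qform_povm_mix by simp

lemma prob_reveal0_povm_mix:
  "prob_reveal0 m n N \<psi> (povm_mix t E E') = t * prob_reveal0 m n N \<psi> E + (1 - t) * prob_reveal0 m n N \<psi> E'"
  unfolding prob_reveal0_def prob_send_povm_mix by (simp add: sum.distrib sum_distrib_left)

lemma prob_detect_povm_mix:
  "prob_detect m n N v \<psi> (povm_mix t E E') = t * prob_detect m n N v \<psi> E + (1 - t) * prob_detect m n N v \<psi> E'"
  unfolding prob_detect_def prob_send_povm_mix prob_send_pass_povm_mix
  by (simp add: sum.distrib sum_distrib_left algebra_simps sum_subtractf)

section \<open>Purifications and fidelity\<close>

lemma bi_inner_purification_self:
  assumes P: "purification m n (mixture_dm N p v) \<phi>" and M: "is_mixture n N p v"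
  shows "bi_inner m n \<phi> \<phi> = 1"
proof -
  have unit: "(\<Sum>k<n. v i k * cnj (v i k)) = 1" if "i < N" for i
  proof -
    have "(\<Sum>k<n. (cmod (v i k))\<^sup>2) = 1"
      using M that unfolding is_mixture_def unit_vec_def by auto
    then have "complex_of_real (\<Sum>k<n. (cmod (v i k))\<^sup>2) = 1" by simp
    then show ?thesis unfolding of_real_sum complex_norm_square .
  qed
  have "bi_inner m n \<phi> \<phi> = (\<Sum>k<n. \<Sum>a<m. \<phi> a k * cnj (\<phi> a k))"
    unfolding bi_inner_def by (subst sum.swap) (simp add: mult.commute)
  also have "\<dots> = (\<Sum>k<n. mixture_dm N p v k k)"
    using P unfolding purification_def by simp
  also have "\<dots> = (\<Sum>i<N. complex_of_real (p i) * (\<Sum>k<n. v i k * cnj (v i k)))"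
    unfolding mixture_dm_def by (subst sum.swap) (simp add: sum_distrib_left mult.assoc)
  also have "\<dots> = 1"
    using M unfolding is_mixture_def by (simp add: unit flip: of_real_sum)
  finally show ?thesis .
qed

lemma bi_inner_unit_le_1:
  assumes "bi_inner m n \<phi>0 \<phi>0 = 1" "bi_inner m n \<phi>1 \<phi>1 = 1"
  shows "cmod (bi_inner m n \<phi>0 \<phi>1) \<le> 1"
proof -
  have sq: "(\<Sum>ak\<in>{..<m} \<times> {..<n}. (cmod (case_prod \<phi> ak))\<^sup>2) = 1" if "bi_inner m n \<phi> \<phi> = 1" for \<phi>
    using that unfolding bi_inner_self_eq_1_iff by (simp add: sum.cartesian_product case_prod_unfold)
  have "(cmod (bi_inner m n \<phi>0 \<phi>1))\<^sup>2 \<le> 1"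
    using complex_Cauchy_Schwarz_sum[of "case_prod \<phi>0" "case_prod \<phi>1" "{..<m} \<times> {..<n}"]
    unfolding sq[OF assms(1)] sq[OF assms(2)]
    by (simp add: bi_inner_def sum.cartesian_product case_prod_unfold)
  then show ?thesis by (simp add: power_le_one_iff)
qed

lemma standard_purification:
  assumes "is_mixture n N p v"
  shows "purification N n (mixture_dm N p v) (\<lambda>i k. complex_of_real (sqrt (p i)) * v i k)"
  unfolding purification_def mixture_dm_def
proof (intro allI impI sum.cong refl)
  fix j k i assume "i \<in> {..<N}"
  then have "p i \<ge> 0" using assms unfolding is_mixture_def by auto
  then show "complex_of_real (sqrt (p i)) * v i j * cnj (complex_of_real (sqrt (p i)) * v i k) =
        complex_of_real (p i) * v i j * cnj (v i k)"
    by (simp add: ac_simps flip: of_real_mult)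
qed

lemma purification_pad:
  assumes "purification m n \<rho> \<phi>" "m \<le> m'"
  shows "purification m' n \<rho> (\<lambda>a k. if a < m then \<phi> a k else 0)"
  unfolding purification_def
proof (intro allI impI)
  fix j k assume "j < n" "k < n"
  have "(\<Sum>a<m'. (if a < m then \<phi> a j else 0) * cnj (if a < m then \<phi> a k else 0)) =
      (\<Sum>a<m'. if a < m then \<phi> a j * cnj (\<phi> a k) else 0)"
    by (intro sum.cong) auto
  also have "\<dots> = (\<Sum>a\<in>{x\<in>{..<m'}. x < m}. \<phi> a j * cnj (\<phi> a k))"
    by (rule sum.inter_filter[symmetric]) simp
  also have "{x\<in>{..<m'}. x < m} = {..<m}" using assms(2) by auto
  finally have "(\<Sum>a<m'. (if a < m then \<phi> a j else 0) * cnj (if a < m then \<phi> a k else 0)) =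
      (\<Sum>a<m. \<phi> a j * cnj (\<phi> a k))" .
  then show "(\<Sum>a<m'. (if a < m then \<phi> a j else 0) * cnj (if a < m then \<phi> a k else 0)) = \<rho> j k"
    using assms(1) \<open>j < n\<close> \<open>k < n\<close> unfolding purification_def by simp
qed

lemma common_purifications_exist:
  assumes "is_mixture n N0 p0 v0" "is_mixture n N1 p1 v1"
  shows "\<exists>m \<phi>0 \<phi>1. purification m n (mixture_dm N0 p0 v0) \<phi>0 \<and> purification m n (mixture_dm N1 p1 v1) \<phi>1"
  using purification_pad[OF standard_purification[OF assms(1)], of "N0 + N1"]
    purification_pad[OF standard_purification[OF assms(2)], of "N0 + N1"]
  by auto

lemma purification_rephase:
  assumes "purification m n \<rho> \<phi>1"
  shows "\<exists>\<psi>. purification m n \<rho> \<psi> \<and> bi_inner m n \<phi>0 \<psi> = complex_of_real (cmod (bi_inner m n \<phi>0 \<phi>1))"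
proof -
  define z where "z = bi_inner m n \<phi>0 \<phi>1"
  define w where "w = (if z = 0 then 1 else cnj z / complex_of_real (cmod z))"
  have ww: "w * cnj w = 1" and wz: "w * z = complex_of_real (cmod z)"
    unfolding w_def using complex_norm_square[of z]
    by (auto simp: field_simps power2_eq_square)
  have "(\<Sum>a<m. w * \<phi>1 a j * cnj (w * \<phi>1 a k)) = (w * cnj w) * (\<Sum>a<m. \<phi>1 a j * cnj (\<phi>1 a k))" for j k
    by (simp add: sum_distrib_left ac_simps)
  then have "purification m n \<rho> (\<lambda>a k. w * \<phi>1 a k)"
    using assms ww unfolding purification_def by simp
  moreover have "bi_inner m n \<phi>0 (\<lambda>a k. w * \<phi>1 a k) = complex_of_real (cmod (bi_inner m n \<phi>0 \<phi>1))"
    using wz unfolding z_def bi_inner_def by (simp add: sum_distrib_left ac_simps)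
  ultimately show ?thesis by blast
qed

lemma cinner_purification_columns:
  assumes "purification m n \<rho> \<phi>" "j < n" "k < n"
  shows "cinner m (\<lambda>a. \<phi> a j) (\<lambda>a. \<phi> a k) = cnj (\<rho> j k)"
proof -
  have "cnj (\<rho> j k) = cnj (\<Sum>a<m. \<phi> a j * cnj (\<phi> a k))"
    using assms unfolding purification_def by simp
  then show ?thesis by (simp add: cinner_def mult.commute)
qed

lemma purification_has_decoder:
  assumes P: "purification m n (mixture_dm N p v) \<phi>" and M: "is_mixture n N p v"
  shows "\<exists>V. is_decoder m n N p v V \<phi>"
proof -
  have "\<forall>j<n. \<forall>k<n. cinner m (\<lambda>a. \<phi> a j) (\<lambda>a. \<phi> a k) =
      cinner N (\<lambda>i. complex_of_real (sqrt (p i)) * v i j) (\<lambda>i. complex_of_real (sqrt (p i)) * v i k)"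
    using cinner_purification_columns[OF P] cinner_purification_columns[OF standard_purification[OF M]]
    by simp
  from gram_eq_imp_contraction[OF this] show ?thesis
    unfolding is_decoder_def by (simp add: mult.commute)
qed

definition overlaps :: "nat \<Rightarrow> (nat \<Rightarrow> nat \<Rightarrow> complex) \<Rightarrow> (nat \<Rightarrow> nat \<Rightarrow> complex) \<Rightarrow> real set" where
  "overlaps n \<rho>0 \<rho>1 = {(cmod (bi_inner m n \<phi>0 \<phi>1))\<^sup>2 | m \<phi>0 \<phi>1.
      purification m n \<rho>0 \<phi>0 \<and> purification m n \<rho>1 \<phi>1}"

lemma
  assumes "is_mixture n N0 p0 v0" "is_mixture n N1 p1 v1"
  shows overlaps_le_1: "s \<in> overlaps n (mixture_dm N0 p0 v0) (mixture_dm N1 p1 v1) \<Longrightarrow> s \<le> 1"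
    and overlaps_nonempty: "overlaps n (mixture_dm N0 p0 v0) (mixture_dm N1 p1 v1) \<noteq> {}"
    and bdd_above_overlaps: "bdd_above (overlaps n (mixture_dm N0 p0 v0) (mixture_dm N1 p1 v1))"
proof -
  show le1: "s \<le> 1" if "s \<in> overlaps n (mixture_dm N0 p0 v0) (mixture_dm N1 p1 v1)" for s
    using that bi_inner_unit_le_1[OF bi_inner_purification_self bi_inner_purification_self] assms
    unfolding overlaps_def by (fastforce simp: power_le_one)
  then show "bdd_above (overlaps n (mixture_dm N0 p0 v0) (mixture_dm N1 p1 v1))"
    by (intro bdd_aboveI) auto
  show "overlaps n (mixture_dm N0 p0 v0) (mixture_dm N1 p1 v1) \<noteq> {}"
    using common_purifications_exist[OF assms] unfolding overlaps_def by blast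
qed

lemma
  assumes "is_mixture n N0 p0 v0" "is_mixture n N1 p1 v1"
  defines "f \<equiv> fidelity n (mixture_dm N0 p0 v0) (mixture_dm N1 p1 v1)"
  shows fidelity_le_1: "f \<le> 1"
    and fidelity_nonneg: "0 \<le> f"
    and less_fidelity_overlap: "e < f \<Longrightarrow> \<exists>m \<phi>0 \<phi>1. purification m n (mixture_dm N0 p0 v0) \<phi>0 \<and>
      purification m n (mixture_dm N1 p1 v1) \<phi>1 \<and> e < (cmod (bi_inner m n \<phi>0 \<phi>1))\<^sup>2"
proof -
  let ?S = "overlaps n (mixture_dm N0 p0 v0) (mixture_dm N1 p1 v1)"
  have f: "f = Sup ?S" unfolding f_def fidelity_def overlaps_def ..
  show "f \<le> 1"
    unfolding f using overlaps_nonempty[OF assms(1,2)] overlaps_le_1[OF assms(1,2)] by (rule cSup_least)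
  obtain s where s: "s \<in> ?S" using overlaps_nonempty[OF assms(1,2)] by blast
  then have "0 \<le> s" unfolding overlaps_def by auto
  also have "s \<le> f" unfolding f using s bdd_above_overlaps[OF assms(1,2)] by (rule cSup_upper)
  finally show "0 \<le> f" .
  show "\<exists>m \<phi>0 \<phi>1. purification m n (mixture_dm N0 p0 v0) \<phi>0 \<and>
      purification m n (mixture_dm N1 p1 v1) \<phi>1 \<and> e < (cmod (bi_inner m n \<phi>0 \<phi>1))\<^sup>2" if "e < f"
    using that less_cSup_iff[OF overlaps_nonempty[OF assms(1,2)] bdd_above_overlaps[OF assms(1,2)]]
    unfolding f overlaps_def by blast
qed

lemma column_sqnorm_le:
  "k < n \<Longrightarrow> (\<Sum>a<m. (cmod (x a k))\<^sup>2) \<le> (\<Sum>a<m. \<Sum>k'<n. (cmod (x a k'))\<^sup>2)"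
  for x :: "nat \<Rightarrow> nat \<Rightarrow> complex"
  by (intro sum_mono member_le_sum) auto

lemma column_cinner_le:
  fixes x y :: "nat \<Rightarrow> nat \<Rightarrow> complex"
  assumes "j < n" "k < n"
  shows "cmod (\<Sum>a<m. cnj (x a k) * y a j) \<le>
    sqrt (\<Sum>a<m. \<Sum>k<n. (cmod (x a k))\<^sup>2) * sqrt (\<Sum>a<m. \<Sum>k<n. (cmod (y a k))\<^sup>2)"
proof -
  have "cmod (\<Sum>a<m. cnj (x a k) * y a j) \<le>
      sqrt (\<Sum>a<m. (cmod (x a k))\<^sup>2) * sqrt (\<Sum>a<m. (cmod (y a j))\<^sup>2)"
    by (rule complex_Cauchy_Schwarz_sum_sqrt)
  also have "\<dots> \<le> sqrt (\<Sum>a<m. \<Sum>k<n. (cmod (x a k))\<^sup>2) * sqrt (\<Sum>a<m. \<Sum>k<n. (cmod (y a k))\<^sup>2)"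
    using column_sqnorm_le[OF assms(2), where m = m and x = x]
      column_sqnorm_le[OF assms(1), where m = m and x = y]
    by (intro mult_mono real_sqrt_le_mono) (auto simp: sum_nonneg)
  finally show ?thesis .
qed

text \<open>Purifications with overlap close to \<open>1\<close> purify nearly equal states: writing
  \<open>\<delta> = \<phi> - \<psi>\<close>, \<open>\<rho>\<^sub>0 - \<rho>\<^sub>1\<close> is a sum of two terms bilinear in \<open>\<delta>\<close> and a unit vector.\<close>
lemma purification_entry_diff_le:
  assumes P0: "purification m n \<rho>0 \<phi>" and P1: "purification m n \<rho>1 \<psi>"
    and n0: "bi_inner m n \<phi> \<phi> = 1" and n1: "bi_inner m n \<psi> \<psi> = 1"
    and r: "bi_inner m n \<phi> \<psi> = complex_of_real r" and jk: "j < n" "k < n"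
  shows "cmod (\<rho>0 j k - \<rho>1 j k) \<le> 2 * sqrt (2 - 2 * r)"
proof -
  define \<delta> where "\<delta> a k = 1 * \<phi> a k + (-1) * \<psi> a k" for a k
  have "bi_inner m n \<psi> \<phi> = complex_of_real r"
    using r cnj_bi_inner[of m n \<phi> \<psi>] by simp
  then have "complex_of_real (\<Sum>a<m. \<Sum>k<n. (cmod (\<delta> a k))\<^sup>2) = complex_of_real (2 - 2 * r)"
    unfolding bi_inner_self[symmetric] \<delta>_def[abs_def] bi_inner_lincomb_left bi_inner_lincomb_right n0 n1 r
    by simp
  then have \<delta>: "(\<Sum>a<m. \<Sum>k<n. (cmod (\<delta> a k))\<^sup>2) = 2 - 2 * r"
    by (simp only: of_real_eq_iff)
  have unit: "(\<Sum>a<m. \<Sum>k<n. (cmod (\<phi> a k))\<^sup>2) = 1" "(\<Sum>a<m. \<Sum>k<n. (cmod (\<psi> a k))\<^sup>2) = 1"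
    using n0 n1 unfolding bi_inner_self_eq_1_iff .
  have "\<rho>0 j k - \<rho>1 j k = (\<Sum>a<m. \<phi> a j * cnj (\<phi> a k)) - (\<Sum>a<m. \<psi> a j * cnj (\<psi> a k))"
    using P0 P1 jk unfolding purification_def by simp
  also have "\<dots> = (\<Sum>a<m. cnj (\<phi> a k) * \<delta> a j) + (\<Sum>a<m. cnj (\<delta> a k) * \<psi> a j)"
    unfolding \<delta>_def by (simp add: algebra_simps sum_subtractf sum.distrib)
  finally have "cmod (\<rho>0 j k - \<rho>1 j k) \<le>
      cmod (\<Sum>a<m. cnj (\<phi> a k) * \<delta> a j) + cmod (\<Sum>a<m. cnj (\<delta> a k) * \<psi> a j)"
    by (simp only: norm_triangle_ineq)
  then show ?thesis
    using column_cinner_le[OF jk, where m = m and x = \<phi> and y = \<delta>]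
      column_cinner_le[OF jk, where m = m and x = \<delta> and y = \<psi>]
    unfolding \<delta> unit by simp
qed

lemma fidelity_eq_1_imp_eq:
  assumes M0: "is_mixture n N0 p0 v0" and M1: "is_mixture n N1 p1 v1"
    and f1: "fidelity n (mixture_dm N0 p0 v0) (mixture_dm N1 p1 v1) = 1"
    and jk: "j < n" "k < n"
  shows "mixture_dm N0 p0 v0 j k = mixture_dm N1 p1 v1 j k"
proof (rule ccontr)
  let ?r0 = "mixture_dm N0 p0 v0" and ?r1 = "mixture_dm N1 p1 v1"
  assume "?r0 j k \<noteq> ?r1 j k"
  define d where "d = cmod (?r0 j k - ?r1 j k)"
  have d0: "d > 0" using \<open>?r0 j k \<noteq> ?r1 j k\<close> unfolding d_def by simp
  obtain m \<phi>0 \<phi>1 where P0: "purification m n ?r0 \<phi>0" and P1: "purification m n ?r1 \<phi>1"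
     and big: "1 - d\<^sup>2 / 16 < (cmod (bi_inner m n \<phi>0 \<phi>1))\<^sup>2"
    using less_fidelity_overlap[OF M0 M1, of "1 - d\<^sup>2 / 16"] f1 d0 by auto
  define r where "r = cmod (bi_inner m n \<phi>0 \<phi>1)"
  obtain \<psi> where P1': "purification m n ?r1 \<psi>" and r: "bi_inner m n \<phi>0 \<psi> = complex_of_real r"
    using purification_rephase[OF P1, of \<phi>0] unfolding r_def by blast
  have "r \<le> 1" unfolding r_def
    by (rule bi_inner_unit_le_1[OF bi_inner_purification_self[OF P0 M0] bi_inner_purification_self[OF P1 M1]])
  have "d \<le> 2 * sqrt (2 - 2 * r)"
    unfolding d_def using bi_inner_purification_self[OF P0 M0] bi_inner_purification_self[OF P1' M1]
    by (rule purification_entry_diff_le[OF P0 P1' _ _ r jk])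
  then have "d\<^sup>2 \<le> (2 * sqrt (2 - 2 * r))\<^sup>2"
    using d0 by (intro power_mono) auto
  also have "\<dots> = 8 - 8 * r"
    using \<open>r \<le> 1\<close> by (simp add: power_mult_distrib)
  finally have "d\<^sup>2 \<le> 8 - 8 * r" .
  moreover have "r\<^sup>2 \<le> r" using \<open>r \<le> 1\<close> unfolding r_def power2_eq_square by (simp add: mult_left_le_one_le)
  ultimately show False using big \<open>r \<le> 1\<close> unfolding r_def by linarith
qed

section \<open>The cheating strategy\<close>

lemma half_reveal_amplitudes:
  fixes \<alpha> c :: real
  assumes cos: "0 < cos \<alpha>" and sin: "0 \<le> sin \<alpha>" and c: "0 \<le> c"
  defines "K \<equiv> sqrt (c\<^sup>2 * (sin \<alpha>)\<^sup>2 + (cos \<alpha>)\<^sup>2)"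
  obtains x y where "x\<^sup>2 + y\<^sup>2 = 1"
    and "(cos (- (\<alpha> / 2)) * x)\<^sup>2 + (sin (- (\<alpha> / 2)) * y)\<^sup>2 +
         2 * (cos (- (\<alpha> / 2)) * x) * (sin (- (\<alpha> / 2)) * y) * c = 1 / 2"
    and "(cos (\<alpha> / 2) * x)\<^sup>2 + (sin (\<alpha> / 2) * y)\<^sup>2 + 2 * (cos (\<alpha> / 2) * x) * (sin (\<alpha> / 2) * y) * c =
         1 / 2 + c * sin (2 * \<alpha>) / (2 * K)"
proof -
  define C where "C = cos (\<alpha> / 2)"
  define S where "S = sin (\<alpha> / 2)"
  define q where "q = c * sin \<alpha> / K"
  define x where "x = sqrt ((1 + q) / 2)"
  define y where "y = sqrt ((1 - q) / 2)"
  have CS: "C\<^sup>2 + S\<^sup>2 = 1" "2 * S * C = sin \<alpha>" "C\<^sup>2 - S\<^sup>2 = cos \<alpha>"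
    unfolding C_def S_def using sin_double[of "\<alpha> / 2"] cos_double[of "\<alpha> / 2"] by simp_all
  have K2: "K\<^sup>2 = c\<^sup>2 * (sin \<alpha>)\<^sup>2 + (cos \<alpha>)\<^sup>2" and K: "0 < K"
    unfolding K_def using cos by (simp_all add: add_nonneg_pos)
  have "c * sin \<alpha> \<le> K"
    unfolding K_def using c sin by (intro real_le_rsqrt) (simp add: power_mult_distrib)
  then have q: "0 \<le> q" "q \<le> 1" unfolding q_def using c sin K by simp_all
  have x2: "x\<^sup>2 = (1 + q) / 2" and y2: "y\<^sup>2 = (1 - q) / 2"
    unfolding x_def y_def using q by simp_all
  have "(x * y)\<^sup>2 = (cos \<alpha> / (2 * K))\<^sup>2"
    unfolding power_mult_distrib x2 y2 q_def using K K2 by (simp add: field_simps power2_eq_square)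
  then have xy: "x * y = cos \<alpha> / (2 * K)"
    by (rule power2_eq_imp_eq) (use cos K q in \<open>simp_all add: x_def y_def\<close>)
  have "(C * x)\<^sup>2 + (S * y)\<^sup>2 = (C\<^sup>2 + S\<^sup>2) / 2 + (C\<^sup>2 - S\<^sup>2) * q / 2"
    unfolding power_mult_distrib x2 y2 by (simp add: field_simps)
  also have "\<dots> = 1 / 2 + c * sin \<alpha> * cos \<alpha> / (2 * K)"
    unfolding CS(1) CS(3) q_def by (simp add: ac_simps)
  finally have square_part: "(C * x)\<^sup>2 + (S * y)\<^sup>2 = 1 / 2 + c * sin \<alpha> * cos \<alpha> / (2 * K)" .
  have "2 * (C * x) * (S * y) * c = (2 * S * C) * c * (x * y)"
    by (simp add: ac_simps)
  also have "\<dots> = c * sin \<alpha> * cos \<alpha> / (2 * K)"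
    unfolding CS(2) xy by (simp add: ac_simps)
  finally have cross_part: "2 * (C * x) * (S * y) * c = c * sin \<alpha> * cos \<alpha> / (2 * K)" .
  show thesis
  proof
    show "x\<^sup>2 + y\<^sup>2 = 1" unfolding x2 y2 by (simp add: field_simps)
    show "(cos (- (\<alpha> / 2)) * x)\<^sup>2 + (sin (- (\<alpha> / 2)) * y)\<^sup>2 +
         2 * (cos (- (\<alpha> / 2)) * x) * (sin (- (\<alpha> / 2)) * y) * c = 1 / 2"
      using square_part cross_part unfolding C_def S_def by simp
    show "(cos (\<alpha> / 2) * x)\<^sup>2 + (sin (\<alpha> / 2) * y)\<^sup>2 + 2 * (cos (\<alpha> / 2) * x) * (sin (\<alpha> / 2) * y) * c =
         1 / 2 + c * sin (2 * \<alpha>) / (2 * K)"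
      using square_part cross_part unfolding C_def S_def sin_double by (simp add: field_simps)
  qed
qed

lemma unit_bivec_qubit_superpose:
  assumes "bi_inner m n \<phi>0 \<phi>0 = 1" "bi_inner m n \<phi>1 \<phi>1 = 1" "x\<^sup>2 + y\<^sup>2 = 1"
  shows "unit_bivec (2 * m) n (qubit_superpose x y \<phi>0 \<phi>1)"
  using assms unfolding unit_bivec_def bi_sqnorm_qubit_superpose bi_inner_self_eq_1_iff by simp

lemma rotated_reveal_of_purifications:
  assumes mix0: "is_mixture n (N 0) (p 0) (v 0)" and mix1: "is_mixture n (N 1) (p 1) (v 1)"
    and P0: "purification m n (mixture_dm (N 0) (p 0) (v 0)) \<phi>0"
    and P1: "purification m n (mixture_dm (N 1) (p 1) (v 1)) \<phi>1"
    and c: "bi_inner m n \<phi>0 \<phi>1 = complex_of_real c"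
  obtains V where "\<And>\<theta>. reveal_povm (2 * m) N (rotated_reveal N V \<theta>)"
    and "\<And>\<theta> x y. prob_reveal0 (2 * m) n N (qubit_superpose x y \<phi>0 \<phi>1) (rotated_reveal N V \<theta>) =
      (cos \<theta> * x)\<^sup>2 + (sin \<theta> * y)\<^sup>2 + 2 * (cos \<theta> * x) * (sin \<theta> * y) * c"
    and "\<And>\<theta> x y. x\<^sup>2 + y\<^sup>2 = 1 \<Longrightarrow>
      prob_detect (2 * m) n N v (qubit_superpose x y \<phi>0 \<phi>1) (rotated_reveal N V \<theta>) \<le> (1 - c\<^sup>2) * (sin \<theta>)\<^sup>2"
proof -
  obtain V0 V1 where dec0: "is_decoder m n (N 0) (p 0) (v 0) V0 \<phi>0"
    and dec1: "is_decoder m n (N 1) (p 1) (v 1) V1 \<phi>1"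
    using purification_has_decoder[OF P0 mix0] purification_has_decoder[OF P1 mix1] by blast
  define V where "V b = (if b = 0 then V0 else V1)" for b :: nat
  have dec: "is_decoder m n (N 0) (p 0) (v 0) (V 0) \<phi>0" "is_decoder m n (N 1) (p 1) (v 1) (V 1) \<phi>1"
    using dec0 dec1 by (simp_all add: V_def)
  have N: "0 < N 0" "0 < N 1"
    using mix0 mix1 unfolding is_mixture_def by (cases "N 0"; cases "N 1"; simp)+
  have norm: "bi_inner m n \<phi>0 \<phi>0 = 1" "bi_inner m n \<phi>1 \<phi>1 = 1"
    using bi_inner_purification_self P0 P1 mix0 mix1 by blast+
  show thesis
  proof (rule that[of V])
    show "reveal_povm (2 * m) N (rotated_reveal N V \<theta>)" for \<theta>
      using dec N by (intro reveal_povm_rotated_reveal) (auto simp: is_decoder_def less_2_cases_iff)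
    show "prob_reveal0 (2 * m) n N (qubit_superpose x y \<phi>0 \<phi>1) (rotated_reveal N V \<theta>) =
      (cos \<theta> * x)\<^sup>2 + (sin \<theta> * y)\<^sup>2 + 2 * (cos \<theta> * x) * (sin \<theta> * y) * c" for \<theta> x y
      by (rule prob_reveal0_rotated_reveal[where N = N, OF N(1) norm c])
    show "prob_detect (2 * m) n N v (qubit_superpose x y \<phi>0 \<phi>1) (rotated_reveal N V \<theta>) \<le> (1 - c\<^sup>2) * (sin \<theta>)\<^sup>2"
      if "x\<^sup>2 + y\<^sup>2 = 1" for \<theta> x y
      by (rule prob_detect_rotated_reveal[OF dec mix0 mix1 norm c that])
  qed
qed

lemma strategy_from_purifications:
  fixes c t \<alpha> :: real
  assumes mix0: "is_mixture n (N 0) (p 0) (v 0)" and mix1: "is_mixture n (N 1) (p 1) (v 1)"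
    and P0: "purification m n (mixture_dm (N 0) (p 0) (v 0)) \<phi>0"
    and P1: "purification m n (mixture_dm (N 1) (p 1) (v 1)) \<phi>1"
    and c: "bi_inner m n \<phi>0 \<phi>1 = complex_of_real c" "0 \<le> c"
    and \<alpha>: "0 < cos \<alpha>" "0 \<le> sin \<alpha>" and t: "0 \<le> t" "t \<le> 1"
  shows "\<exists>m psi E0 E1.
     unit_bivec m n psi \<and> reveal_povm m N E0 \<and> reveal_povm m N E1 \<and>
     prob_reveal0 m n N psi E1 = 1 / 2 \<and>
     prob_reveal0 m n N psi E0 - prob_reveal0 m n N psi E1 =
       t * (c * sin (2 * \<alpha>) / (2 * sqrt (c\<^sup>2 * (sin \<alpha>)\<^sup>2 + (cos \<alpha>)\<^sup>2))) \<and>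
     prob_detect m n N v psi E0 \<le> (1 - c\<^sup>2) * (sin (\<alpha> / 2))\<^sup>2 \<and>
     prob_detect m n N v psi E1 \<le> (1 - c\<^sup>2) * (sin (\<alpha> / 2))\<^sup>2"
proof -
  obtain V where povm: "\<And>\<theta>. reveal_povm (2 * m) N (rotated_reveal N V \<theta>)"
    and reveal0: "\<And>\<theta> x y. prob_reveal0 (2 * m) n N (qubit_superpose x y \<phi>0 \<phi>1) (rotated_reveal N V \<theta>) =
      (cos \<theta> * x)\<^sup>2 + (sin \<theta> * y)\<^sup>2 + 2 * (cos \<theta> * x) * (sin \<theta> * y) * c"
    and detect: "\<And>\<theta> x y. x\<^sup>2 + y\<^sup>2 = 1 \<Longrightarrow>
      prob_detect (2 * m) n N v (qubit_superpose x y \<phi>0 \<phi>1) (rotated_reveal N V \<theta>) \<le> (1 - c\<^sup>2) * (sin \<theta>)\<^sup>2"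
    using rotated_reveal_of_purifications[OF mix0 mix1 P0 P1 c(1)] by blast
  obtain x y where xy: "x\<^sup>2 + y\<^sup>2 = 1"
    and half: "(cos (- (\<alpha> / 2)) * x)\<^sup>2 + (sin (- (\<alpha> / 2)) * y)\<^sup>2 +
         2 * (cos (- (\<alpha> / 2)) * x) * (sin (- (\<alpha> / 2)) * y) * c = 1 / 2"
    and more: "(cos (\<alpha> / 2) * x)\<^sup>2 + (sin (\<alpha> / 2) * y)\<^sup>2 + 2 * (cos (\<alpha> / 2) * x) * (sin (\<alpha> / 2) * y) * c =
         1 / 2 + c * sin (2 * \<alpha>) / (2 * sqrt (c\<^sup>2 * (sin \<alpha>)\<^sup>2 + (cos \<alpha>)\<^sup>2))"
    using half_reveal_amplitudes[OF \<alpha> c(2)] by blast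
  let ?\<psi> = "qubit_superpose x y \<phi>0 \<phi>1" and ?E1 = "rotated_reveal N V (- (\<alpha> / 2))"
  let ?E0 = "povm_mix t (rotated_reveal N V (\<alpha> / 2)) ?E1"
  have detect_E1: "prob_detect (2 * m) n N v ?\<psi> ?E1 \<le> (1 - c\<^sup>2) * (sin (\<alpha> / 2))\<^sup>2"
    using detect[OF xy, of "- (\<alpha> / 2)"] by simp
  have "prob_detect (2 * m) n N v ?\<psi> ?E0
      \<le> t * ((1 - c\<^sup>2) * (sin (\<alpha> / 2))\<^sup>2) + (1 - t) * ((1 - c\<^sup>2) * (sin (\<alpha> / 2))\<^sup>2)"
    unfolding prob_detect_povm_mix using t detect[OF xy] detect_E1 by (intro add_mono mult_left_mono) auto
  then have detect_E0: "prob_detect (2 * m) n N v ?\<psi> ?E0 \<le> (1 - c\<^sup>2) * (sin (\<alpha> / 2))\<^sup>2"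
    by (simp add: algebra_simps)
  have "unit_bivec (2 * m) n ?\<psi>"
    using bi_inner_purification_self P0 P1 mix0 mix1 xy by (blast intro: unit_bivec_qubit_superpose)
  moreover have "reveal_povm (2 * m) N ?E0" by (intro reveal_povm_mix t povm)
  moreover have "prob_reveal0 (2 * m) n N ?\<psi> ?E1 = 1 / 2" unfolding reveal0 half ..
  moreover have "prob_reveal0 (2 * m) n N ?\<psi> ?E0 - prob_reveal0 (2 * m) n N ?\<psi> ?E1 =
      t * (c * sin (2 * \<alpha>) / (2 * sqrt (c\<^sup>2 * (sin \<alpha>)\<^sup>2 + (cos \<alpha>)\<^sup>2)))"
    unfolding prob_reveal0_povm_mix reveal0 half more by (simp add: field_simps)
  ultimately show ?thesis using povm detect_E0 detect_E1 by blast
qed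

section \<open>Approximating the fidelity\<close>

lemma exists_aligned_overlap:
  assumes M0: "is_mixture n N0 p0 v0" and M1: "is_mixture n N1 p1 v1"
    and e: "e < fidelity n (mixture_dm N0 p0 v0) (mixture_dm N1 p1 v1)"
  obtains m \<phi>0 \<phi>1 c where "purification m n (mixture_dm N0 p0 v0) \<phi>0"
    "purification m n (mixture_dm N1 p1 v1) \<phi>1" "bi_inner m n \<phi>0 \<phi>1 = complex_of_real c" "0 \<le> c" "e < c\<^sup>2"
proof -
  obtain m \<phi>0 \<phi>1 where P0: "purification m n (mixture_dm N0 p0 v0) \<phi>0"
    and P1: "purification m n (mixture_dm N1 p1 v1) \<phi>1" and big: "e < (cmod (bi_inner m n \<phi>0 \<phi>1))\<^sup>2"
    using less_fidelity_overlap[OF M0 M1 e] by blast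
  obtain \<psi> where "purification m n (mixture_dm N1 p1 v1) \<psi>"
    and "bi_inner m n \<phi>0 \<psi> = complex_of_real (cmod (bi_inner m n \<phi>0 \<phi>1))"
    using purification_rephase[OF P1] by blast
  then show thesis using that[OF P0] big by simp
qed

lemma half_angle_detect_le:
  fixes \<alpha> c f :: real
  assumes "f - (1 - f) * cos \<alpha> \<le> c\<^sup>2"
  shows "(1 - c\<^sup>2) * (sin (\<alpha> / 2))\<^sup>2 \<le> (1 - f) * (sin \<alpha>)\<^sup>2 / 2"
proof -
  have "(sin \<alpha>)\<^sup>2 / 2 = (sin (\<alpha> / 2))\<^sup>2 * (1 + cos \<alpha>)"
    using sin_double[of "\<alpha> / 2"] cos_double_cos[of "\<alpha> / 2"] sin_cos_squared_add[of "\<alpha> / 2"]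
    by (simp add: power_mult_distrib algebra_simps)
  moreover have "(1 - c\<^sup>2) * (sin (\<alpha> / 2))\<^sup>2 \<le> ((1 - f) * (1 + cos \<alpha>)) * (sin (\<alpha> / 2))\<^sup>2"
    using assms by (intro mult_right_mono) (auto simp: algebra_simps)
  ultimately show ?thesis by (simp add: algebra_simps)
qed

lemma overlap_thresholds:
  fixes f \<alpha> :: real
  assumes f: "0 < f" "f < 1" and sin: "0 < sin \<alpha>" and cos: "0 < cos \<alpha>"
  obtains e where "e < f"
    and "\<And>c. e < c\<^sup>2 \<Longrightarrow> f * (c\<^sup>2 * (sin \<alpha>)\<^sup>2 + (cos \<alpha>)\<^sup>2) \<le> c\<^sup>2 \<and> f - (1 - f) * cos \<alpha> \<le> c\<^sup>2"
proof
  define e where "e = max (f * (cos \<alpha>)\<^sup>2 / (1 - f * (sin \<alpha>)\<^sup>2)) (f - (1 - f) * cos \<alpha>)"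
  have "f * (sin \<alpha>)\<^sup>2 < (sin \<alpha>)\<^sup>2" using f sin by simp
  then have den: "f * (sin \<alpha>)\<^sup>2 < 1" and "(cos \<alpha>)\<^sup>2 < 1 - f * (sin \<alpha>)\<^sup>2"
    using sin_cos_squared_add[of \<alpha>] zero_le_power2[of "cos \<alpha>"] by linarith+
  then have "f * (cos \<alpha>)\<^sup>2 < f * (1 - f * (sin \<alpha>)\<^sup>2)"
    using f by (intro mult_strict_left_mono) auto
  then show "e < f" unfolding e_def using f den cos by (simp add: divide_less_eq mult.commute)
  fix c :: real assume "e < c\<^sup>2"
  moreover from this have "f * (cos \<alpha>)\<^sup>2 < c\<^sup>2 * (1 - f * (sin \<alpha>)\<^sup>2)"
    using den unfolding e_def by (simp add: divide_less_eq mult.commute)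
  ultimately show "f * (c\<^sup>2 * (sin \<alpha>)\<^sup>2 + (cos \<alpha>)\<^sup>2) \<le> c\<^sup>2 \<and> f - (1 - f) * cos \<alpha> \<le> c\<^sup>2"
    unfolding e_def by (simp add: algebra_simps)
qed

text \<open>The fidelity is a supremum that need not be attained, so we only take purifications good
  enough for the two inequalities, which are strict at \<open>c\<^sup>2 = f\<close> unless \<open>f \<in> {0, 1}\<close>; for
  \<open>f = 1\<close> the states coincide and a common purification gives \<open>c = 1\<close>.\<close>
lemma good_aligned_overlap:
  fixes \<alpha> :: real
  assumes M0: "is_mixture n N0 p0 v0" and M1: "is_mixture n N1 p1 v1"
    and sin: "0 < sin \<alpha>" and cos: "0 < cos \<alpha>"
  defines "f \<equiv> fidelity n (mixture_dm N0 p0 v0) (mixture_dm N1 p1 v1)"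
  obtains m \<phi>0 \<phi>1 c where "purification m n (mixture_dm N0 p0 v0) \<phi>0"
    "purification m n (mixture_dm N1 p1 v1) \<phi>1" "bi_inner m n \<phi>0 \<phi>1 = complex_of_real c" "0 \<le> c"
    "f * (c\<^sup>2 * (sin \<alpha>)\<^sup>2 + (cos \<alpha>)\<^sup>2) \<le> c\<^sup>2" "f - (1 - f) * cos \<alpha> \<le> c\<^sup>2"
proof -
  have f: "0 \<le> f" "f \<le> 1"
    unfolding f_def using fidelity_nonneg[OF M0 M1] fidelity_le_1[OF M0 M1] by auto
  consider "f = 0" | "f = 1" | "0 < f" "f < 1" using f by linarith
  then show thesis
  proof cases
    case 1
    then have e: "-1 < fidelity n (mixture_dm N0 p0 v0) (mixture_dm N1 p1 v1)" unfolding f_def by simp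
    obtain m \<phi>0 \<phi>1 c where P: "purification m n (mixture_dm N0 p0 v0) \<phi>0"
      "purification m n (mixture_dm N1 p1 v1) \<phi>1" "bi_inner m n \<phi>0 \<phi>1 = complex_of_real c" "0 \<le> c"
      by (rule exists_aligned_overlap[OF M0 M1 e]) auto
    moreover have "- cos \<alpha> \<le> c\<^sup>2" using cos zero_le_power2[of c] by linarith
    ultimately show thesis using 1 by (intro that) simp_all
  next
    case 2
    let ?\<phi> = "\<lambda>i k. complex_of_real (sqrt (p0 i)) * v0 i k"
    have P0: "purification N0 n (mixture_dm N0 p0 v0) ?\<phi>" by (rule standard_purification[OF M0])
    moreover have "purification N0 n (mixture_dm N1 p1 v1) ?\<phi>"
      using P0 fidelity_eq_1_imp_eq[OF M0 M1] 2 unfolding f_def purification_def by simp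
    ultimately show thesis
      using that[of N0 ?\<phi> ?\<phi> 1] bi_inner_purification_self[OF P0 M0] 2 by simp
  next
    case 3
    obtain e where "e < f" and good: "\<And>c. e < c\<^sup>2 \<Longrightarrow>
        f * (c\<^sup>2 * (sin \<alpha>)\<^sup>2 + (cos \<alpha>)\<^sup>2) \<le> c\<^sup>2 \<and> f - (1 - f) * cos \<alpha> \<le> c\<^sup>2"
      using overlap_thresholds[OF 3 sin cos] by blast
    obtain m \<phi>0 \<phi>1 c where "purification m n (mixture_dm N0 p0 v0) \<phi>0"
      "purification m n (mixture_dm N1 p1 v1) \<phi>1" "bi_inner m n \<phi>0 \<phi>1 = complex_of_real c" "0 \<le> c"
      and "e < c\<^sup>2"
      using \<open>e < f\<close> unfolding f_def by (rule exists_aligned_overlap[OF M0 M1]) auto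
    then show thesis using that good by blast
  qed
qed

text \<open>For \<open>c = 0\<close> the weight \<open>\<surd>f K / c\<close> is \<open>0\<close> (division by zero), which is right since then \<open>f = 0\<close>.\<close>
lemma advantage_weight:
  fixes f c K s :: real
  assumes f: "0 \<le> f" and c: "0 \<le> c" and K: "0 < K" and weight: "f * K\<^sup>2 \<le> c\<^sup>2"
  shows "\<exists>t. 0 \<le> t \<and> t \<le> 1 \<and> t * (c * s / (2 * K)) = sqrt f * s / 2"
proof (intro exI conjI)
  have "(sqrt f * K)\<^sup>2 \<le> c\<^sup>2" using weight f by (simp add: power_mult_distrib)
  then have fK: "sqrt f * K \<le> c" using c by (rule power2_le_imp_le)
  then have "c = 0 \<Longrightarrow> f = 0" using K f by (auto simp: mult_le_0_iff)
  show "0 \<le> sqrt f * K / c" using f K c by simp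
  show "sqrt f * K / c \<le> 1" using fK c by (cases "c = 0") simp_all
  show "sqrt f * K / c * (c * s / (2 * K)) = sqrt f * s / 2"
    using \<open>c = 0 \<Longrightarrow> f = 0\<close> K by (cases "c = 0") (simp_all add: field_simps)
qed

lemma overlap_and_weight:
  fixes \<alpha> :: real
  assumes M0: "is_mixture n N0 p0 v0" and M1: "is_mixture n N1 p1 v1"
    and \<alpha>: "0 \<le> \<alpha>" "\<alpha> \<le> pi / 4"
  defines "f \<equiv> fidelity n (mixture_dm N0 p0 v0) (mixture_dm N1 p1 v1)"
  obtains m \<phi>0 \<phi>1 c t where "purification m n (mixture_dm N0 p0 v0) \<phi>0"
    "purification m n (mixture_dm N1 p1 v1) \<phi>1" "bi_inner m n \<phi>0 \<phi>1 = complex_of_real c" "0 \<le> c"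
    "0 \<le> t" "t \<le> 1"
    "t * (c * sin (2 * \<alpha>) / (2 * sqrt (c\<^sup>2 * (sin \<alpha>)\<^sup>2 + (cos \<alpha>)\<^sup>2))) = sqrt f * sin (2 * \<alpha>) / 2"
    "(1 - c\<^sup>2) * (sin (\<alpha> / 2))\<^sup>2 \<le> (1 - f) * (sin \<alpha>)\<^sup>2 / 2"
proof (cases "\<alpha> = 0")
  case True
  have "-1 < f" unfolding f_def using fidelity_nonneg[OF M0 M1] by simp
  then obtain m \<phi>0 \<phi>1 c where "purification m n (mixture_dm N0 p0 v0) \<phi>0"
    "purification m n (mixture_dm N1 p1 v1) \<phi>1" "bi_inner m n \<phi>0 \<phi>1 = complex_of_real c" "0 \<le> c"
    unfolding f_def by (rule exists_aligned_overlap[OF M0 M1]) auto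
  then show thesis using True by (intro that[where t = 0]) simp_all
next
  case False
  have sin: "0 < sin \<alpha>" and cos: "0 < cos \<alpha>"
    using \<alpha> False pi_gt_zero by (auto intro!: sin_gt_zero cos_gt_zero_pi)
  obtain m \<phi>0 \<phi>1 c where P: "purification m n (mixture_dm N0 p0 v0) \<phi>0"
    "purification m n (mixture_dm N1 p1 v1) \<phi>1" "bi_inner m n \<phi>0 \<phi>1 = complex_of_real c" "0 \<le> c"
    and weight: "f * (c\<^sup>2 * (sin \<alpha>)\<^sup>2 + (cos \<alpha>)\<^sup>2) \<le> c\<^sup>2" and detect: "f - (1 - f) * cos \<alpha> \<le> c\<^sup>2"
    using good_aligned_overlap[OF M0 M1 sin cos] unfolding f_def by blast
  define K where "K = sqrt (c\<^sup>2 * (sin \<alpha>)\<^sup>2 + (cos \<alpha>)\<^sup>2)"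
  have K: "0 < K" unfolding K_def using cos by (simp add: add_nonneg_pos)
  have "f * K\<^sup>2 \<le> c\<^sup>2" using weight unfolding K_def by (simp add: add_nonneg_nonneg)
  then obtain t where "0 \<le> t" "t \<le> 1" "t * (c * sin (2 * \<alpha>) / (2 * K)) = sqrt f * sin (2 * \<alpha>) / 2"
    using advantage_weight[OF fidelity_nonneg[OF M0 M1, folded f_def] \<open>0 \<le> c\<close> K] by blast
  then show thesis using that[OF P] half_angle_detect_le[OF detect] unfolding K_def by blast
qed

theorem theorem8:
  fixes n :: nat and N :: "nat \<Rightarrow> nat" and p :: "nat \<Rightarrow> nat \<Rightarrow> real"
    and v :: "nat \<Rightarrow> nat \<Rightarrow> nat \<Rightarrow> complex" and \<alpha> :: real
  assumes mix0: "is_mixture n (N 0) (p 0) (v 0)"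
    and mix1: "is_mixture n (N 1) (p 1) (v 1)"
    and alpha: "0 \<le> \<alpha>" "\<alpha> \<le> pi / 4"
  defines "f \<equiv> fidelity n (mixture_dm (N 0) (p 0) (v 0)) (mixture_dm (N 1) (p 1) (v 1))"
  shows "\<exists>m psi E0 E1.
     unit_bivec m n psi \<and> reveal_povm m N E0 \<and> reveal_povm m N E1 \<and>
     prob_reveal0 m n N psi E1 = 1 / 2 \<and>
     prob_reveal0 m n N psi E0 - prob_reveal0 m n N psi E1 = sqrt f * sin (2 * \<alpha>) / 2 \<and>
     prob_detect m n N v psi E0 \<le> (1 - f) * (sin \<alpha>)\<^sup>2 / 2 \<and>
     prob_detect m n N v psi E1 \<le> (1 - f) * (sin \<alpha>)\<^sup>2 / 2"
proof -
  obtain m \<phi>0 \<phi>1 c t where P: "purification m n (mixture_dm (N 0) (p 0) (v 0)) \<phi>0"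
    "purification m n (mixture_dm (N 1) (p 1) (v 1)) \<phi>1"
    and c: "bi_inner m n \<phi>0 \<phi>1 = complex_of_real c" "0 \<le> c" and t: "0 \<le> t" "t \<le> 1"
    and advantage: "t * (c * sin (2 * \<alpha>) / (2 * sqrt (c\<^sup>2 * (sin \<alpha>)\<^sup>2 + (cos \<alpha>)\<^sup>2))) = sqrt f * sin (2 * \<alpha>) / 2"
    and detect: "(1 - c\<^sup>2) * (sin (\<alpha> / 2))\<^sup>2 \<le> (1 - f) * (sin \<alpha>)\<^sup>2 / 2"
    using overlap_and_weight[OF mix0 mix1 alpha] unfolding f_def by blast
  have cos: "0 < cos \<alpha>" using alpha pi_gt_zero by (intro cos_gt_zero_pi) linarith+
  have sin: "0 \<le> sin \<alpha>" using alpha pi_gt_zero by (intro sin_ge_zero) linarith+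
  from strategy_from_purifications[OF mix0 mix1 P c cos sin t]
  show ?thesis unfolding advantage using detect by (blast intro: order_trans)
qed

end
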